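(* In the setting described in the context, almost surely $\lim_{n\to\infty}\sup_{t\in[0,T]}\lVert x^n(t)-\hat x(T_n+t)\rVert=0$.
   Context: Setting. $S$ is a compact metric space; $h:\mathbb{R}^d\times S\to\mathbb{R}^d$ is jointly continuous and there is $L>0$ with $\lVert h(x_1,y)-h(x_2,y)\rVert\le L\lVert x_1-x_2\rVert$ for all $x_1,x_2,y$. Step sizes $a(n)>0$ satisfy $\sum_n a(n)=\infty$, $\sum_n a(n)^2<\infty$, $\sup_n a(n)\le1$. On a probability space with filtration $\{\mathcal{F}_n\}$, $\{y_n\}_{n\ge0}$ is an $S$-valued adapted process, $x_0$ is $\mathcal{F}_0$-measurable, $\{M_n\}_{n\ge1}$ is a square-integrable martingale difference sequence with $E[\lVert M_{n+1}\rVert^2\mid\mathcal{F}_n]\le K(1+\lVert x_n\rVert^2)$, and $x_{n+1}=x_n+a(n)[h(x_n,y_n)+M_{n+1}]$. For $c\ge1$, $h_c(x,y):=h(cx,y)/c$. Rescaling. Fix $T>0$. Let $t(0)=0$, $t(n)=\sum_{i=0}^{n-1}a(i)$; $\bar x$ the piecewise linear interpolation with $\bar x(t(n))=x_n$. Let $T_0=0$, $T_n=\min\{t(m):t(m)\ge T_{n-1}+T\}$, $r(n)=\lVert\bar x(T_n)\rVert\vee1$; for $t\in[T_n,T_{n+1})$, $\hat x(t)=\bar x(t)/r(n)$, and $\hat x(T_{n+1}^-):=\lim_{t\uparrow T_{n+1}}\hat x(t)$ (this left limit is used in place of $\hat x(T_{n+1})$ when $T_n+t=T_{n+1}$). For $t\in[t(m),t(m+1))$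 with $T_n\le t(m)<t(m+1)\le T_{n+1}$, let $\hat z(t)=h_{r(n)}(\hat x(t(m)),y_m)$. Let $x^n(t)=\hat x(T_n)+\int_0^t\hat z(T_n+s)\,ds$ for $t\in[0,T]$. *)

theory Defs
  imports "HOL-Analysis.Analysis" "HOL-Probability.Probability"
begin

definition filtration :: "'a measure \<Rightarrow> (nat \<Rightarrow> 'a measure) \<Rightarrow> bool" where
  "filtration M F \<longleftrightarrow> (\<forall>n. subalgebra M (F n)) \<and> (\<forall>m n. m \<le> n \<longrightarrow> sets (F m) \<subseteq> sets (F n))"

definition tt :: "(nat \<Rightarrow> real) \<Rightarrow> nat \<Rightarrow> real" where
  "tt a n = (\<Sum>i<n. a i)"

text \<open>index m with t(m) <= t < t(m+1) (for t >= 0)\<close>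
definition idx :: "(nat \<Rightarrow> real) \<Rightarrow> real \<Rightarrow> nat" where
  "idx a t = (LEAST m. t < tt a (Suc m))"

definition xbar :: "(nat \<Rightarrow> real) \<Rightarrow> (nat \<Rightarrow> 'b::real_normed_vector) \<Rightarrow> real \<Rightarrow> 'b" where
  "xbar a x t = (let m = idx a t in x m + ((t - tt a m) / a m) *\<^sub>R (x (Suc m) - x m))"

primrec Nidx :: "(nat \<Rightarrow> real) \<Rightarrow> real \<Rightarrow> nat \<Rightarrow> nat" where
  "Nidx a T 0 = 0"
| "Nidx a T (Suc n) = (LEAST m. tt a (Nidx a T n) + T \<le> tt a m)"

definition Tn :: "(nat \<Rightarrow> real) \<Rightarrow> real \<Rightarrow> nat \<Rightarrow> real" where
  "Tn a T n = tt a (Nidx a T n)"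

definition rr :: "(nat \<Rightarrow> real) \<Rightarrow> real \<Rightarrow> (nat \<Rightarrow> 'b::real_normed_vector) \<Rightarrow> nat \<Rightarrow> real" where
  "rr a T x n = max (norm (xbar a x (Tn a T n))) 1"

text \<open>block index n with T_n <= t < T_{n+1}\<close>
definition blk :: "(nat \<Rightarrow> real) \<Rightarrow> real \<Rightarrow> real \<Rightarrow> nat" where
  "blk a T t = (LEAST n. t < Tn a T (Suc n))"

definition xhat :: "(nat \<Rightarrow> real) \<Rightarrow> real \<Rightarrow> (nat \<Rightarrow> 'b::real_normed_vector) \<Rightarrow> real \<Rightarrow> 'b" where
  "xhat a T x t = xbar a x t /\<^sub>R rr a T x (blk a T t)"

definition hc :: "('b::real_normed_vector \<Rightarrow> 'c \<Rightarrow> 'b) \<Rightarrow> real \<Rightarrow> 'b \<Rightarrow> 'c \<Rightarrow> 'b" where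
  "hc h c x y = h (c *\<^sub>R x) y /\<^sub>R c"

definition zhat :: "('b::real_normed_vector \<Rightarrow> 'c \<Rightarrow> 'b) \<Rightarrow> (nat \<Rightarrow> real) \<Rightarrow> real \<Rightarrow>
    (nat \<Rightarrow> 'b) \<Rightarrow> (nat \<Rightarrow> 'c) \<Rightarrow> real \<Rightarrow> 'b" where
  "zhat h a T x y t = (let m = idx a t; n = blk a T t in
      hc h (rr a T x n) (xhat a T x (tt a m)) (y m))"

definition xn :: "('b::euclidean_space \<Rightarrow> 'c \<Rightarrow> 'b) \<Rightarrow> (nat \<Rightarrow> real) \<Rightarrow> real \<Rightarrow>
    (nat \<Rightarrow> 'b) \<Rightarrow> (nat \<Rightarrow> 'c) \<Rightarrow> nat \<Rightarrow> real \<Rightarrow> 'b" where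
  "xn h a T x y n t = xhat a T x (Tn a T n) + integral {0..t} (\<lambda>s. zhat h a T x y (Tn a T n + s))"

definition xhat_blk :: "(nat \<Rightarrow> real) \<Rightarrow> real \<Rightarrow> (nat \<Rightarrow> 'b::real_normed_vector) \<Rightarrow> nat \<Rightarrow> real \<Rightarrow> 'b" where
  "xhat_blk a T x n t = (if Tn a T n + t = Tn a T (Suc n)
      then Lim (at_left (Tn a T (Suc n))) (xhat a T x)
      else xhat a T x (Tn a T n + t))"

end

theory Submission
  imports Defs
begin

text \<open>
  On a block \<open>[T\<^sub>n, T\<^sub>n\<^sub>+\<^sub>1]\<close> the rescaled iterates obey the recursion whose drift part is
  integrated by \<open>x\<^sup>n\<close>; the two differ only by the rescaled noise \<open>a(i) M\<^sub>i\<^sub>+\<^sub>1 / r(n)\<close>.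
  Hence \<open>x\<^sup>n(t) - xhat (T\<^sub>n + t)\<close> is, up to sign, a convex combination of two consecutive partial sums of
  this noise over the block, and it suffices that these partial sums tend to 0 uniformly in the block.

  To control them, the noise is switched off wherever \<open>\<parallel>x\<^sub>i\<parallel>\<close> exceeds \<open>R r(n)\<close>. The truncated sums
  have orthogonal increments with second moments \<open>O(a(i)\<^sup>2)\<close>, so Kolmogorov's maximal inequality and
  Borel--Cantelli (using \<open>\<Sum> a(i)\<^sup>2 < \<infinity>\<close>) show that almost surely they are eventually small.
  Once they are at most 1, the linear growth \<open>\<parallel>h(u, v)\<parallel> \<le> C\<^sub>0 + L \<parallel>u\<parallel>\<close> and a discrete Gronwall
  argument keep \<open>\<parallel>x\<^sub>i\<parallel> \<le> R r(n)\<close> throughout the block for a suitable \<open>R\<close>, so the truncation was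
  never active.
\<close>

section \<open>Filtrations and square integrability\<close>

lemma filtration_space: "filtration M F \<Longrightarrow> space (F i) = space M"
  by (simp add: filtration_def subalgebra_def)

lemma filtration_measurable_mono:
  assumes "filtration M F" "f \<in> F i \<rightarrow>\<^sub>M N" "i \<le> j"
  shows "f \<in> F j \<rightarrow>\<^sub>M N"
proof (rule measurable_from_subalg[OF _ assms(2)])
  show "subalgebra (F j) (F i)"
    using assms filtration_space[OF assms(1)] by (simp add: filtration_def subalgebra_def)
qed

lemma filtration_measurable:
  "filtration M F \<Longrightarrow> f \<in> F i \<rightarrow>\<^sub>M N \<Longrightarrow> f \<in> M \<rightarrow>\<^sub>M N"
  by (rule measurable_from_subalg) (simp_all add: filtration_def)

lemma (in prob_space) filtration_sigma_finite_subalgebra: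
  assumes "filtration M F"
  shows "sigma_finite_subalgebra M (F i)"
proof (rule finite_measure_subalgebra_is_sigma_finite)
  show "finite_measure_subalgebra M (F i)"
    using assms finite_measure_axioms
    by (simp add: filtration_def finite_measure_subalgebra_def finite_measure_subalgebra_axioms_def)
qed

lemma integrable_mult_square_integrable:
  fixes f g :: "'a \<Rightarrow> real"
  assumes [measurable]: "f \<in> borel_measurable M" "g \<in> borel_measurable M"
    and "integrable M (\<lambda>x. (f x)\<^sup>2)" "integrable M (\<lambda>x. (g x)\<^sup>2)"
  shows "integrable M (\<lambda>x. f x * g x)"
proof (rule Bochner_Integration.integrable_bound[where f="\<lambda>x. (f x)\<^sup>2 + (g x)\<^sup>2"])
  show "integrable M (\<lambda>x. (f x)\<^sup>2 + (g x)\<^sup>2)" using assms by auto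
  show "AE x in M. norm (f x * g x) \<le> norm ((f x)\<^sup>2 + (g x)\<^sup>2)"
  proof (intro AE_I2)
    fix x
    have "2 * \<bar>f x * g x\<bar> \<le> (f x)\<^sup>2 + (g x)\<^sup>2"
      using sum_squares_bound[of "\<bar>f x\<bar>" "\<bar>g x\<bar>"] by (simp add: abs_mult power2_eq_square)
    then show "norm (f x * g x) \<le> norm ((f x)\<^sup>2 + (g x)\<^sup>2)" by simp
  qed
qed measurable

lemma square_integrable_sum:
  fixes f :: "nat \<Rightarrow> 'a \<Rightarrow> real"
  assumes "finite I" and [measurable]: "\<And>i. i \<in> I \<Longrightarrow> f i \<in> borel_measurable M"
    and "\<And>i. i \<in> I \<Longrightarrow> integrable M (\<lambda>x. (f i x)\<^sup>2)"
  shows "integrable M (\<lambda>x. (\<Sum>i\<in>I. f i x)\<^sup>2)"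
  using assms
proof (induction I rule: finite_induct)
  case (insert i I)
  have [measurable]: "(\<lambda>x. \<Sum>i\<in>I. f i x) \<in> borel_measurable M" using insert by measurable
  have "integrable M (\<lambda>x. (f i x)\<^sup>2 + (\<Sum>i\<in>I. f i x)\<^sup>2 + 2 * (f i x * (\<Sum>i\<in>I. f i x)))"
    using insert integrable_mult_square_integrable[of "f i" M "\<lambda>x. \<Sum>i\<in>I. f i x"] by auto
  then show ?case using insert by (simp add: power2_sum mult.assoc)
qed simp

section \<open>Kolmogorov's maximal inequality\<close>

text \<open>The increments need not be independent: orthogonality to everything measurable
  with respect to the past, as for martingale differences, is all that is used.\<close>

locale orthogonal_increments = prob_space M for M :: "'a measure" +
  fixes G :: "nat \<Rightarrow> 'a measure" and X :: "nat \<Rightarrow> 'a \<Rightarrow> real" and N N' :: nat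
  assumes filtration: "filtration M G"
    and increment_measurable: "\<And>i. N \<le> i \<Longrightarrow> i < N' \<Longrightarrow> X i \<in> borel_measurable (G (Suc i))"
    and increment_square_integrable: "\<And>i. N \<le> i \<Longrightarrow> i < N' \<Longrightarrow> integrable M (\<lambda>\<omega>. (X i \<omega>)\<^sup>2)"
    and increment_orthogonal: "\<And>i g. N \<le> i \<Longrightarrow> i < N' \<Longrightarrow> g \<in> borel_measurable (G i) \<Longrightarrow>
        integrable M (\<lambda>\<omega>. g \<omega> * X i \<omega>) \<Longrightarrow> (\<integral>\<omega>. g \<omega> * X i \<omega> \<partial>M) = 0"
begin

definition partial_sum :: "nat \<Rightarrow> 'a \<Rightarrow> real" where
  "partial_sum m \<omega> = (\<Sum>i\<in>{N..<m}. X i \<omega>)"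

lemma increment_borel: "N \<le> i \<Longrightarrow> i < N' \<Longrightarrow> X i \<in> borel_measurable M"
  using filtration_measurable[OF filtration increment_measurable] .

lemma partial_sum_measurable:
  assumes "m \<le> k" "k \<le> N'"
  shows "partial_sum m \<in> borel_measurable (G k)"
  unfolding partial_sum_def
proof (rule borel_measurable_sum)
  fix i assume "i \<in> {N..<m}"
  then show "X i \<in> borel_measurable (G k)"
    using assms by (intro filtration_measurable_mono[OF filtration increment_measurable]) auto
qed

lemma partial_sum_borel: "m \<le> N' \<Longrightarrow> partial_sum m \<in> borel_measurable M"
  using filtration_measurable[OF filtration partial_sum_measurable[OF order_refl]] .

lemma partial_sum_square_integrable: "m \<le> N' \<Longrightarrow> integrable M (\<lambda>\<omega>. (partial_sum m \<omega>)\<^sup>2)"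
  unfolding partial_sum_def
  by (intro square_integrable_sum increment_borel increment_square_integrable) auto

lemma partial_sum_split: "N \<le> k \<Longrightarrow> k \<le> m \<Longrightarrow> partial_sum m \<omega> = partial_sum k \<omega> + (\<Sum>i\<in>{k..<m}. X i \<omega>)"
  by (simp add: partial_sum_def sum.atLeastLessThan_concat)

lemma integral_mult_future_increments:
  assumes g: "g \<in> borel_measurable (G k)" "integrable M (\<lambda>\<omega>. (g \<omega>)\<^sup>2)"
    and k: "N \<le> k" "k \<le> m" "m \<le> N'"
  shows "(\<integral>\<omega>. g \<omega> * (partial_sum m \<omega> - partial_sum k \<omega>) \<partial>M) = 0"
proof -
  have gM: "g \<in> borel_measurable M" using filtration_measurable[OF filtration g(1)] .
  have int: "integrable M (\<lambda>\<omega>. g \<omega> * X i \<omega>)" if "i \<in> {k..<m}" for i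
    using that k by (intro integrable_mult_square_integrable gM g(2) increment_borel
        increment_square_integrable) auto
  have "(\<integral>\<omega>. g \<omega> * (partial_sum m \<omega> - partial_sum k \<omega>) \<partial>M) = (\<integral>\<omega>. (\<Sum>i\<in>{k..<m}. g \<omega> * X i \<omega>) \<partial>M)"
    using k by (simp add: partial_sum_split[of k m] sum_distrib_left)
  also have "\<dots> = (\<Sum>i\<in>{k..<m}. \<integral>\<omega>. g \<omega> * X i \<omega> \<partial>M)"
    using int by (rule Bochner_Integration.integral_sum)
  also have "\<dots> = 0"
    using k int by (intro sum.neutral ballI increment_orthogonal
        filtration_measurable_mono[OF filtration g(1)]) auto
  finally show ?thesis .
qed

lemma integral_partial_sum_square:
  assumes "N \<le> m" "m \<le> N'"
  shows "(\<integral>\<omega>. (partial_sum m \<omega>)\<^sup>2 \<partial>M) = (\<Sum>i\<in>{N..<m}. \<integral>\<omega>. (X i \<omega>)\<^sup>2 \<partial>M)"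
  using assms
proof (induction m rule: dec_induct)
  case (step m)
  let ?S = "partial_sum m" and ?X = "X m"
  have S: "partial_sum (Suc m) \<omega> = ?S \<omega> + ?X \<omega>" for \<omega>
    using step.hyps by (simp add: partial_sum_def)
  have iS: "integrable M (\<lambda>\<omega>. (?S \<omega>)\<^sup>2)" and iX: "integrable M (\<lambda>\<omega>. (?X \<omega>)\<^sup>2)"
    using step by (auto intro: partial_sum_square_integrable increment_square_integrable)
  have iSX: "integrable M (\<lambda>\<omega>. ?S \<omega> * ?X \<omega>)"
    using step by (intro integrable_mult_square_integrable partial_sum_borel increment_borel iS iX) auto
  have "(\<integral>\<omega>. ?S \<omega> * ?X \<omega> \<partial>M) = 0"
    using integral_mult_future_increments[OF partial_sum_measurable[OF order_refl] iS, of "Suc m"]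
      step S by simp
  then have "(\<integral>\<omega>. (partial_sum (Suc m) \<omega>)\<^sup>2 \<partial>M) = (\<integral>\<omega>. (?S \<omega>)\<^sup>2 \<partial>M) + (\<integral>\<omega>. (?X \<omega>)\<^sup>2 \<partial>M)"
    using iS iX iSX by (simp add: S power2_sum mult.assoc)
  then show ?case using step by simp
qed (simp add: partial_sum_def)

lemma set_integral_partial_sum_square_mono:
  assumes A: "A \<in> sets (G k)" and k: "N \<le> k" "k \<le> N'"
  shows "(\<integral>\<omega>. indicator A \<omega> * (partial_sum k \<omega>)\<^sup>2 \<partial>M)
    \<le> (\<integral>\<omega>. indicator A \<omega> * (partial_sum N' \<omega>)\<^sup>2 \<partial>M)"
proof -
  have AM: "A \<in> sets M" using A filtration by (auto simp: filtration_def subalgebra_def)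
  define g where "g \<omega> = indicator A \<omega> * partial_sum k \<omega>" for \<omega>
  define R where "R \<omega> = partial_sum N' \<omega> - partial_sum k \<omega>" for \<omega>
  have gG: "g \<in> borel_measurable (G k)"
    unfolding g_def using A partial_sum_measurable[OF order_refl k(2)] by measurable
  have iS: "integrable M (\<lambda>\<omega>. (partial_sum m \<omega>)\<^sup>2)" if "m \<le> N'" for m
    using that by (rule partial_sum_square_integrable)
  have "(g \<omega>)\<^sup>2 = indicator A \<omega> * (partial_sum k \<omega>)\<^sup>2" for \<omega>
    by (simp add: g_def power_mult_distrib indicator_def)
  then have g2: "integrable M (\<lambda>\<omega>. (g \<omega>)\<^sup>2)"
    using integrable_mult_indicator[OF AM iS[OF k(2)]] by simp
  have R_eq: "R = (\<lambda>\<omega>. \<Sum>i\<in>{k..<N'}. X i \<omega>)"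
    using partial_sum_split[OF k] by (auto simp: R_def)
  have R2: "integrable M (\<lambda>\<omega>. (R \<omega>)\<^sup>2)"
    unfolding R_eq using k by (intro square_integrable_sum increment_borel increment_square_integrable) auto
  have "R \<in> borel_measurable M"
    unfolding R_eq using k by (intro borel_measurable_sum increment_borel) auto
  with g2 R2 have iRg: "integrable M (\<lambda>\<omega>. g \<omega> * R \<omega>)"
    by (intro integrable_mult_square_integrable filtration_measurable[OF filtration gG])
  have "(\<integral>\<omega>. indicator A \<omega> * (partial_sum N' \<omega>)\<^sup>2 \<partial>M)
      = (\<integral>\<omega>. indicator A \<omega> * (partial_sum k \<omega>)\<^sup>2 + 2 * (g \<omega> * R \<omega>) + indicator A \<omega> * (R \<omega>)\<^sup>2 \<partial>M)"
    by (rule Bochner_Integration.integral_cong) (auto simp: g_def R_def power2_eq_square indicator_def algebra_simps)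
  also have "\<dots> = (\<integral>\<omega>. indicator A \<omega> * (partial_sum k \<omega>)\<^sup>2 \<partial>M) + 2 * (\<integral>\<omega>. g \<omega> * R \<omega> \<partial>M)
      + (\<integral>\<omega>. indicator A \<omega> * (R \<omega>)\<^sup>2 \<partial>M)"
    using integrable_mult_indicator[OF AM iS[OF k(2)]] integrable_mult_indicator[OF AM R2] iRg by simp
  also have "(\<integral>\<omega>. g \<omega> * R \<omega> \<partial>M) = 0"
    unfolding R_def using integral_mult_future_increments[OF gG g2 k(1) k(2) order_refl] .
  finally show ?thesis by (simp add: integral_nonneg_AE)
qed

definition first_exceedance :: "real \<Rightarrow> nat \<Rightarrow> 'a set" where
  "first_exceedance \<delta> k = {\<omega>\<in>space M. \<delta> \<le> \<bar>partial_sum k \<omega>\<bar> \<and> (\<forall>j\<in>{N..<k}. \<bar>partial_sum j \<omega>\<bar> < \<delta>)}"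

lemma first_exceedance_measurable:
  assumes "k \<le> N'"
  shows "first_exceedance \<delta> k \<in> sets (G k)"
proof -
  have [measurable]: "partial_sum j \<in> borel_measurable (G k)" if "j \<le> k" for j
    using that assms by (rule partial_sum_measurable)
  have "{\<omega>\<in>space (G k). \<delta> \<le> \<bar>partial_sum k \<omega>\<bar> \<and> (\<forall>j\<in>{N..<k}. \<bar>partial_sum j \<omega>\<bar> < \<delta>)} \<in> sets (G k)"
    by measurable
  then show ?thesis by (simp add: first_exceedance_def filtration_space[OF filtration])
qed

lemma disjoint_first_exceedance: "disjoint_family_on (first_exceedance \<delta>) {N..}"
proof -
  have "\<omega> \<notin> first_exceedance \<delta> k'" if "\<omega> \<in> first_exceedance \<delta> k" "N \<le> k" "k < k'" for \<omega> k k'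
    using that by (auto simp: first_exceedance_def intro!: bexI[of _ k])
  then show ?thesis
    unfolding disjoint_family_on_def by (metis disjoint_iff linorder_neqE_nat atLeast_iff)
qed

lemma exceedance_subset_first_exceedance:
  "{\<omega>\<in>space M. \<exists>m\<in>{N..N'}. \<delta> \<le> \<bar>partial_sum m \<omega>\<bar>} \<subseteq> (\<Union>k\<in>{N..N'}. first_exceedance \<delta> k)"
proof safe
  fix \<omega> m assume \<omega>: "\<omega> \<in> space M" and m: "m \<in> {N..N'}" "\<delta> \<le> \<bar>partial_sum m \<omega>\<bar>"
  define k where "k = (LEAST k. k \<in> {N..N'} \<and> \<delta> \<le> \<bar>partial_sum k \<omega>\<bar>)"
  have k: "k \<in> {N..N'}" "\<delta> \<le> \<bar>partial_sum k \<omega>\<bar>"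
    using LeastI[of "\<lambda>k. k \<in> {N..N'} \<and> \<delta> \<le> \<bar>partial_sum k \<omega>\<bar>" m] m by (auto simp: k_def)
  have "\<bar>partial_sum j \<omega>\<bar> < \<delta>" if "j \<in> {N..<k}" for j
    using not_less_Least[of j "\<lambda>k. k \<in> {N..N'} \<and> \<delta> \<le> \<bar>partial_sum k \<omega>\<bar>"] that k
    by (auto simp: k_def)
  then show "\<omega> \<in> (\<Union>k\<in>{N..N'}. first_exceedance \<delta> k)"
    using k \<omega> by (auto simp: first_exceedance_def)
qed

lemma first_exceedance_sets:
  assumes "k \<le> N'" shows "first_exceedance \<delta> k \<in> sets M"
  using first_exceedance_measurable[OF assms] filtration by (auto simp: filtration_def subalgebra_def)

lemma sum_indicator_first_exceedance_le_1:
  "(\<Sum>k\<in>{N..N'}. indicator (first_exceedance \<delta> k) \<omega>) \<le> (1::real)"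
proof (cases "\<exists>j\<in>{N..N'}. \<omega> \<in> first_exceedance \<delta> j")
  case True
  then obtain j where j: "j \<in> {N..N'}" "\<omega> \<in> first_exceedance \<delta> j" by blast
  have "disjoint_family_on (first_exceedance \<delta>) {N..N'}"
    using disjoint_first_exceedance by (rule disjoint_family_on_mono[rotated]) auto
  from sum_indicator_disjoint_family[OF this j(2) _ j(1), of "\<lambda>_. 1::real"] show ?thesis by simp
qed (auto simp: indicator_def)

lemma measure_first_exceedance_le:
  assumes \<delta>: "\<delta> > 0" and k: "N \<le> k" "k \<le> N'"
  shows "\<delta>\<^sup>2 * measure M (first_exceedance \<delta> k)
    \<le> (\<integral>\<omega>. indicator (first_exceedance \<delta> k) \<omega> * (partial_sum N' \<omega>)\<^sup>2 \<partial>M)"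
proof -
  let ?A = "first_exceedance \<delta> k"
  have A: "?A \<in> sets M" using k by (intro first_exceedance_sets)
  have "\<delta>\<^sup>2 * measure M ?A = (\<integral>\<omega>. indicator ?A \<omega> * \<delta>\<^sup>2 \<partial>M)"
    using A by (simp add: mult.commute)
  also have "\<dots> \<le> (\<integral>\<omega>. indicator ?A \<omega> * (partial_sum k \<omega>)\<^sup>2 \<partial>M)"
  proof (rule integral_mono)
    show "integrable M (\<lambda>\<omega>. indicator ?A \<omega> * \<delta>\<^sup>2)"
      using A by (simp add: emeasure_eq_measure)
    show "integrable M (\<lambda>\<omega>. indicator ?A \<omega> * (partial_sum k \<omega>)\<^sup>2)"
      using integrable_mult_indicator[OF A partial_sum_square_integrable[OF k(2)]] by simp
    show "indicator ?A \<omega> * \<delta>\<^sup>2 \<le> indicator ?A \<omega> * (partial_sum k \<omega>)\<^sup>2" for \<omega>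
      using \<delta> power_mono[of \<delta> "\<bar>partial_sum k \<omega>\<bar>" 2]
      by (auto simp: indicator_def first_exceedance_def)
  qed
  also have "\<dots> \<le> (\<integral>\<omega>. indicator ?A \<omega> * (partial_sum N' \<omega>)\<^sup>2 \<partial>M)"
    using k by (intro set_integral_partial_sum_square_mono first_exceedance_measurable)
  finally show ?thesis .
qed

text \<open>The first exceedance sets are disjoint, so summing the previous bound over them costs at most
  the second moment of the final sum.\<close>

theorem maximal_inequality:
  assumes \<delta>: "\<delta> > 0" and "N \<le> N'"
  shows "measure M {\<omega>\<in>space M. \<exists>m\<in>{N..N'}. \<delta> \<le> \<bar>partial_sum m \<omega>\<bar>}
     \<le> (\<Sum>i\<in>{N..<N'}. \<integral>\<omega>. (X i \<omega>)\<^sup>2 \<partial>M) / \<delta>\<^sup>2"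
proof -
  let ?A = "first_exceedance \<delta>" and ?S = "partial_sum N'"
  have iA: "integrable M (\<lambda>\<omega>. indicator (?A k) \<omega> * (?S \<omega>)\<^sup>2)" if "k \<le> N'" for k
    using integrable_mult_indicator[OF first_exceedance_sets[OF that] partial_sum_square_integrable[OF order_refl]]
    by simp
  have "\<delta>\<^sup>2 * measure M {\<omega>\<in>space M. \<exists>m\<in>{N..N'}. \<delta> \<le> \<bar>partial_sum m \<omega>\<bar>}
      \<le> \<delta>\<^sup>2 * measure M (\<Union>k\<in>{N..N'}. ?A k)"
    using exceedance_subset_first_exceedance first_exceedance_sets
    by (intro mult_left_mono finite_measure_mono) auto
  also have "\<dots> \<le> \<delta>\<^sup>2 * (\<Sum>k\<in>{N..N'}. measure M (?A k))"
    using first_exceedance_sets by (intro mult_left_mono measure_UNION_le) auto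
  also have "\<dots> \<le> (\<Sum>k\<in>{N..N'}. \<integral>\<omega>. indicator (?A k) \<omega> * (?S \<omega>)\<^sup>2 \<partial>M)"
    unfolding sum_distrib_left using \<delta> by (intro sum_mono measure_first_exceedance_le) auto
  also have "\<dots> = (\<integral>\<omega>. (\<Sum>k\<in>{N..N'}. indicator (?A k) \<omega>) * (?S \<omega>)\<^sup>2 \<partial>M)"
    unfolding sum_distrib_right using iA by (intro Bochner_Integration.integral_sum[symmetric]) auto
  also have "\<dots> \<le> (\<integral>\<omega>. (?S \<omega>)\<^sup>2 \<partial>M)"
  proof (rule integral_mono)
    show "integrable M (\<lambda>\<omega>. (\<Sum>k\<in>{N..N'}. indicator (?A k) \<omega>) * (?S \<omega>)\<^sup>2)"
      unfolding sum_distrib_right using iA by (intro Bochner_Integration.integrable_sum) auto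
    show "integrable M (\<lambda>\<omega>. (?S \<omega>)\<^sup>2)" by (rule partial_sum_square_integrable) simp
    show "(\<Sum>k\<in>{N..N'}. indicator (?A k) \<omega>) * (?S \<omega>)\<^sup>2 \<le> (?S \<omega>)\<^sup>2" for \<omega>
      using sum_indicator_first_exceedance_le_1 by (simp add: mult_left_le_one_le sum_nonneg)
  qed
  also have "\<dots> = (\<Sum>i\<in>{N..<N'}. \<integral>\<omega>. (X i \<omega>)\<^sup>2 \<partial>M)"
    using integral_partial_sum_square assms by simp
  finally show ?thesis using \<delta> by (simp add: field_simps)
qed

end

section \<open>Measurability of Caratheodory functions\<close>

definition grid_round :: "nat \<Rightarrow> 'b::euclidean_space \<Rightarrow> 'b" where
  "grid_round k u = (\<Sum>b\<in>Basis. (real_of_int \<lfloor>real (Suc k) * (u \<bullet> b)\<rfloor> / real (Suc k)) *\<^sub>R b)"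

lemma norm_grid_round_diff_le: "norm (grid_round k u - u) \<le> real DIM('b) / real (Suc k)"
  for u :: "'b::euclidean_space"
proof -
  let ?c = "real (Suc k)"
  have "grid_round k u - u = (\<Sum>b\<in>Basis. (real_of_int \<lfloor>?c * (u \<bullet> b)\<rfloor> / ?c - u \<bullet> b) *\<^sub>R b)"
    unfolding grid_round_def
    by (subst (2) euclidean_representation[symmetric]) (simp add: sum_subtractf scaleR_diff_left)
  also have "norm \<dots> \<le> (\<Sum>b\<in>Basis. norm ((real_of_int \<lfloor>?c * (u \<bullet> b)\<rfloor> / ?c - u \<bullet> b) *\<^sub>R b))"
    by (rule norm_sum)
  also have "\<dots> \<le> (\<Sum>b\<in>(Basis::'b set). 1 / ?c)"
  proof (rule sum_mono)
    fix b :: 'b assume b: "b \<in> Basis"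
    have "\<bar>real_of_int \<lfloor>?c * (u \<bullet> b)\<rfloor> - ?c * (u \<bullet> b)\<bar> \<le> 1"
      using of_int_floor_le[of "?c * (u \<bullet> b)"] real_of_int_floor_add_one_gt[of "?c * (u \<bullet> b)"]
      by linarith
    moreover have "real_of_int \<lfloor>?c * (u \<bullet> b)\<rfloor> / ?c - u \<bullet> b
        = (real_of_int \<lfloor>?c * (u \<bullet> b)\<rfloor> - ?c * (u \<bullet> b)) / ?c"
      by (simp add: field_simps del: of_nat_Suc)
    ultimately show "norm ((real_of_int \<lfloor>?c * (u \<bullet> b)\<rfloor> / ?c - u \<bullet> b) *\<^sub>R b) \<le> 1 / ?c"
      using b by (simp add: abs_divide divide_right_mono del: of_nat_Suc)
  qed
  also have "\<dots> = real DIM('b) / ?c" by simp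
  finally show ?thesis .
qed

lemma countable_range_grid_round: "countable (range (grid_round k :: 'b::euclidean_space \<Rightarrow> 'b))"
proof -
  define enc :: "('b \<Rightarrow> int) \<Rightarrow> 'b" where
    "enc z = (\<Sum>b\<in>Basis. (real_of_int (z b) / real (Suc k)) *\<^sub>R b)" for z
  have "grid_round k u = enc (restrict (\<lambda>b. \<lfloor>real (Suc k) * (u \<bullet> b)\<rfloor>) Basis)" for u :: 'b
    unfolding grid_round_def enc_def by (intro sum.cong) auto
  then have "range (grid_round k :: 'b \<Rightarrow> 'b) \<subseteq> enc ` (Basis \<rightarrow>\<^sub>E (UNIV::int set))"
    by force
  moreover have "countable (enc ` (Basis \<rightarrow>\<^sub>E (UNIV::int set)))"
    by (intro countable_image countable_PiE) auto
  ultimately show ?thesis by (rule countable_subset)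
qed

lemma grid_round_tendsto: "(\<lambda>k. grid_round k u) \<longlonglongrightarrow> u"
  for u :: "'b::euclidean_space"
proof (rule LIM_zero_cancel, rule tendsto_norm_zero_cancel, rule Lim_null_comparison)
  show "\<forall>\<^sub>F k in sequentially. norm (norm (grid_round k u - u)) \<le> real DIM('b) * inverse (real (Suc k))"
    using norm_grid_round_diff_le[of _ u] by (intro always_eventually allI) (simp add: divide_inverse)
  show "(\<lambda>k. real DIM('b) * inverse (real (Suc k))) \<longlonglongrightarrow> 0"
    by (intro tendsto_mult_right_zero LIMSEQ_inverse_real_of_nat)
qed

lemma measurable_grid_round_comp:
  assumes f: "f \<in> borel_measurable N" and H: "\<And>u. H u \<in> N \<rightarrow>\<^sub>M K"
  shows "(\<lambda>\<omega>. H (grid_round k (f \<omega>)) \<omega>) \<in> N \<rightarrow>\<^sub>M K"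
proof (rule measurable_compose_countable'[OF H _ countable_range_grid_round])
  have round: "(\<lambda>\<omega>. grid_round k (f \<omega>)) \<in> borel_measurable N"
    unfolding grid_round_def using f by measurable
  show "(\<lambda>\<omega>. grid_round k (f \<omega>)) \<in> N \<rightarrow>\<^sub>M count_space (range (grid_round k))"
  proof (subst measurable_count_space_eq_countable[OF countable_range_grid_round], intro conjI ballI)
    show "(\<lambda>\<omega>. grid_round k (f \<omega>)) \<in> space N \<rightarrow> range (grid_round k)" by auto
    show "(\<lambda>\<omega>. grid_round k (f \<omega>)) -` {z} \<inter> space N \<in> sets N" for z
      by (rule measurable_sets[OF round]) auto
  qed
qed

text \<open>The composition is the pointwise limit of its versions with the first argument rounded by the
  countably-valued \<open>grid_round k\<close>.\<close>

lemma borel_measurable_caratheodory: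
  fixes h :: "'b::euclidean_space \<Rightarrow> 'c::topological_space \<Rightarrow> 'd::metric_space"
  assumes cont: "\<And>u. continuous_on S (h u)"
    and lip: "\<And>u1 u2 v. v \<in> S \<Longrightarrow> dist (h u1 v) (h u2 v) \<le> L * dist u1 u2"
    and f: "f \<in> borel_measurable N" and g: "g \<in> borel_measurable N"
    and gS: "\<And>\<omega>. \<omega> \<in> space N \<Longrightarrow> g \<omega> \<in> S"
  shows "(\<lambda>\<omega>. h (f \<omega>) (g \<omega>)) \<in> borel_measurable N"
proof (rule borel_measurable_LIMSEQ_metric)
  have "(\<lambda>\<omega>. h u (g \<omega>)) \<in> borel_measurable N" for u
  proof -
    have "h u \<in> borel_measurable (restrict_space borel S)"
      using cont by (rule borel_measurable_continuous_on_restrict)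
    moreover have "g \<in> N \<rightarrow>\<^sub>M restrict_space borel S"
      using gS g by (intro measurable_restrict_space2) auto
    ultimately show ?thesis
      using measurable_comp[of g N "restrict_space borel S" "h u" borel] by (simp add: o_def)
  qed
  with f show "(\<lambda>\<omega>. h (grid_round k (f \<omega>)) (g \<omega>)) \<in> borel_measurable N" for k
    by (rule measurable_grid_round_comp)
  fix \<omega> assume \<omega>: "\<omega> \<in> space N"
  show "(\<lambda>k. h (grid_round k (f \<omega>)) (g \<omega>)) \<longlonglongrightarrow> h (f \<omega>) (g \<omega>)"
  proof (rule tendsto_dist_iff[THEN iffD2], rule Lim_null_comparison)
    have "dist (h (grid_round k (f \<omega>)) (g \<omega>)) (h (f \<omega>) (g \<omega>)) \<le> \<bar>L\<bar> * dist (grid_round k (f \<omega>)) (f \<omega>)"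
      for k using lip[OF gS[OF \<omega>]] by (rule order_trans) (simp add: mult_right_mono)
    then show "\<forall>\<^sub>F k in sequentially. norm (dist (h (grid_round k (f \<omega>)) (g \<omega>)) (h (f \<omega>) (g \<omega>)))
        \<le> \<bar>L\<bar> * dist (grid_round k (f \<omega>)) (f \<omega>)"
      by (intro always_eventually allI) simp
    show "(\<lambda>k. \<bar>L\<bar> * dist (grid_round k (f \<omega>)) (f \<omega>)) \<longlonglongrightarrow> 0"
      by (intro tendsto_mult_right_zero tendsto_dist_iff[THEN iffD1, OF grid_round_tendsto])
  qed
qed

section \<open>The time grid\<close>

locale step_sizes =
  fixes a :: "nat \<Rightarrow> real" and T :: real
  assumes a_pos: "\<And>n. a n > 0" and a_div: "\<not> summable a" and a_le1: "\<And>n. a n \<le> 1"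
    and T_pos: "T > 0"
begin

declare Nidx.simps(2)[simp del]

lemma tt_0[simp]: "tt a 0 = 0" by (simp add: tt_def)

lemma tt_Suc: "tt a (Suc n) = tt a n + a n" by (simp add: tt_def)

lemma sum_step_sizes: "m \<le> k \<Longrightarrow> (\<Sum>i\<in>{m..<k}. a i) = tt a k - tt a m"
  by (induction k rule: dec_induct) (auto simp: tt_Suc)

lemma tt_strict_mono: "strict_mono (tt a)"
  by (rule strict_monoI_Suc) (simp add: tt_Suc a_pos)

lemma tt_less_iff[simp]: "tt a m < tt a n \<longleftrightarrow> m < n"
  using tt_strict_mono by (rule strict_mono_less)

lemma tt_le_iff[simp]: "tt a m \<le> tt a n \<longleftrightarrow> m \<le> n"
  using tt_strict_mono by (rule strict_mono_less_eq)

lemma tt_nonneg: "tt a n \<ge> 0"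
  using tt_le_iff[of 0 n] by simp

lemma tt_unbounded: "\<exists>n. B < tt a n"
proof (rule ccontr)
  assume "\<not> ?thesis"
  then have "summable a"
    by (intro summableI_nonneg_bounded[where x=B]) (auto simp: tt_def less_imp_le[OF a_pos] not_less)
  with a_div show False by simp
qed

lemma idx_eq:
  assumes "tt a m \<le> t" "t < tt a (Suc m)"
  shows "idx a t = m"
  unfolding idx_def
proof (rule Least_equality)
  fix k assume "t < tt a (Suc k)"
  then show "m \<le> k" using assms(1) tt_less_iff[of m "Suc k"] by linarith
qed fact

lemma idx_bounds:
  assumes "0 \<le> t" shows "tt a (idx a t) \<le> t" "t < tt a (Suc (idx a t))"
proof -
  obtain n where n: "t < tt a n" using tt_unbounded by blast
  define m where "m = (LEAST m. t < tt a m)"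
  have m: "t < tt a m" unfolding m_def by (rule LeastI[of _ n]) (rule n)
  then obtain k where k: "m = Suc k" using assms by (cases m) auto
  have "\<not> t < tt a k" using not_less_Least[of k "\<lambda>m. t < tt a m"] k by (simp add: m_def)
  then have "idx a t = k" using m k by (intro idx_eq) auto
  then show "tt a (idx a t) \<le> t" "t < tt a (Suc (idx a t))" using m k \<open>\<not> t < tt a k\<close> by auto
qed

lemma xbar_tt: "xbar a X (tt a m) = X m"
  using idx_eq[of m "tt a m"] a_pos[of m] by (simp add: xbar_def tt_Suc)

lemma Nidx_Suc_bounds:
  "tt a (Nidx a T n) + T \<le> tt a (Nidx a T (Suc n))"
  "tt a (Nidx a T (Suc n)) < tt a (Nidx a T n) + T + 1"
proof -
  let ?P = "\<lambda>m. tt a (Nidx a T n) + T \<le> tt a m"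
  obtain k where "tt a (Nidx a T n) + T < tt a k" using tt_unbounded by blast
  then show P: "?P (Nidx a T (Suc n))" unfolding Nidx.simps(2) by (intro LeastI[of ?P k]) auto
  then obtain j where j: "Nidx a T (Suc n) = Suc j"
    using T_pos tt_nonneg[of "Nidx a T n"] by (cases "Nidx a T (Suc n)") auto
  have "\<not> ?P j" using not_less_Least[of j ?P] j by (simp add: Nidx.simps(2))
  then show "tt a (Nidx a T (Suc n)) < tt a (Nidx a T n) + T + 1"
    using j a_le1[of j] by (simp add: tt_Suc)
qed

lemma Nidx_less_Suc: "Nidx a T n < Nidx a T (Suc n)"
  using Nidx_Suc_bounds(1)[of n] T_pos by (metis less_add_same_cancel1 order_less_le_trans tt_less_iff)

lemma Nidx_Suc_eq_Suc:
  obtains j where "Nidx a T (Suc n) = Suc j" "Nidx a T n \<le> j"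
  using less_imp_Suc_add[OF Nidx_less_Suc[of n]] by (metis le_add1)

lemma Nidx_strict_mono: "strict_mono (Nidx a T)"
  using Nidx_less_Suc by (rule strict_monoI_Suc)

lemma Nidx_mono: "m \<le> n \<Longrightarrow> Nidx a T m \<le> Nidx a T n"
  using Nidx_strict_mono by (simp add: strict_mono_less_eq)

lemma sum_step_sizes_block_le:
  assumes "Nidx a T n \<le> j" "j \<le> Nidx a T (Suc n)"
  shows "(\<Sum>i\<in>{Nidx a T n..<j}. a i) \<le> T + 1"
  using assms Nidx_Suc_bounds(2)[of n] tt_le_iff[of j "Nidx a T (Suc n)"]
  by (simp add: sum_step_sizes del: tt_le_iff)

lemma Tn_le_iff[simp]: "Tn a T m \<le> Tn a T n \<longleftrightarrow> m \<le> n"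
  using Nidx_strict_mono by (simp add: Tn_def strict_mono_less_eq)

lemma blk_eq:
  assumes "Tn a T n \<le> t" "t < Tn a T (Suc n)"
  shows "blk a T t = n"
  unfolding blk_def
proof (rule Least_equality)
  fix k assume "t < Tn a T (Suc k)"
  then show "n \<le> k" using assms(1) Tn_le_iff[of "Suc k" n] by linarith
qed fact

lemma blk_tt:
  assumes "Nidx a T n \<le> m" "m < Nidx a T (Suc n)"
  shows "blk a T (tt a m) = n"
  using assms by (intro blk_eq) (auto simp: Tn_def)

lemma rr_eq: "rr a T X n = max (norm (X (Nidx a T n))) 1"
  by (simp add: rr_def Tn_def xbar_tt)

lemma xhat_tt:
  assumes "Nidx a T n \<le> m" "m < Nidx a T (Suc n)"
  shows "xhat a T X (tt a m) = X m /\<^sub>R rr a T X n"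
  using assms by (simp add: xhat_def xbar_tt blk_tt)

end

section \<open>The rescaled iterates on one block\<close>

text \<open>The shape of the interpolation error: \<open>xm\<close>, \<open>xs\<close> are the rescaled iterates at both ends of the
  step containing \<open>T\<^sub>n + t\<close>; their drift parts cancel against the integral and only the noise remains.\<close>

lemma convex_combination_error_eq:
  fixes x0 s z1 z2 c xm xs :: "'d::real_vector"
  assumes "xm = x0 + s + z1" "xs = x0 + s + am *\<^sub>R c + z2" "th * am = d"
  shows "(x0 + (s + d *\<^sub>R c)) - (xm + th *\<^sub>R (xs - xm)) = - ((1 - th) *\<^sub>R z1 + th *\<^sub>R z2)"
proof -
  from assms(3) have "d *\<^sub>R c = th *\<^sub>R (am *\<^sub>R c)" by simp
  then show ?thesis using assms(1,2) by (simp add: algebra_simps)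
qed

locale recursion_path = step_sizes +
  fixes h :: "'b::euclidean_space \<Rightarrow> 'c \<Rightarrow> 'b" and X :: "nat \<Rightarrow> 'b" and Y :: "nat \<Rightarrow> 'c"
    and E :: "nat \<Rightarrow> 'b"
  assumes recursion: "\<And>k. X (Suc k) = X k + a k *\<^sub>R (h (X k) (Y k) + E (Suc k))"
begin

abbreviation scale :: "nat \<Rightarrow> real" where
  "scale n \<equiv> rr a T X n"

definition scaled_drift :: "nat \<Rightarrow> nat \<Rightarrow> 'b" where
  "scaled_drift n i = h (X i) (Y i) /\<^sub>R scale n"

definition noise_sum :: "nat \<Rightarrow> nat \<Rightarrow> 'b" where
  "noise_sum n m = (\<Sum>i\<in>{Nidx a T n..<m}. (a i / scale n) *\<^sub>R E (Suc i))"

lemma scale_ge_1: "scale n \<ge> 1"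
  by (simp add: rr_eq)

lemma scaled_iterate_eq:
  assumes "Nidx a T n \<le> m"
  shows "X m /\<^sub>R scale n
    = X (Nidx a T n) /\<^sub>R scale n + (\<Sum>i\<in>{Nidx a T n..<m}. a i *\<^sub>R scaled_drift n i) + noise_sum n m"
  using assms
proof (induction m rule: dec_induct)
  case (step m)
  have "X (Suc m) /\<^sub>R scale n = X m /\<^sub>R scale n + a m *\<^sub>R scaled_drift n m + (a m / scale n) *\<^sub>R E (Suc m)"
    by (subst recursion) (simp add: scaled_drift_def algebra_simps divide_inverse)
  then show ?case using step by (simp add: noise_sum_def algebra_simps)
qed (simp add: noise_sum_def)

lemma zhat_eq_scaled_drift:
  assumes "Nidx a T n \<le> j" "j < Nidx a T (Suc n)" "tt a j \<le> t" "t < tt a (Suc j)"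
  shows "zhat h a T X Y t = scaled_drift n j"
proof -
  have "tt a (Nidx a T n) \<le> t" using assms(1,3) tt_le_iff[of "Nidx a T n" j] by linarith
  moreover have "tt a (Suc j) \<le> tt a (Nidx a T (Suc n))" using assms(2) by (simp add: Suc_le_eq)
  then have "t < tt a (Nidx a T (Suc n))" using assms(4) by linarith
  ultimately have "blk a T t = n" by (intro blk_eq) (auto simp: Tn_def)
  then show ?thesis
    using xhat_tt[OF assms(1,2), of X] idx_eq[OF assms(3,4)] scale_ge_1[of n]
    by (simp add: zhat_def hc_def scaled_drift_def)
qed

lemma zhat_has_integral_step:
  assumes "Nidx a T n \<le> j" "j < Nidx a T (Suc n)" "tt a j \<le> t" "t \<le> tt a (Suc j)"
  shows "((\<lambda>s. zhat h a T X Y (Tn a T n + s)) has_integral ((t - tt a j) *\<^sub>R scaled_drift n j))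
           {tt a j - Tn a T n .. t - Tn a T n}"
proof (rule has_integral_spike[where S="{tt a (Suc j) - Tn a T n}" and f="\<lambda>s. scaled_drift n j"])
  fix s assume "s \<in> {tt a j - Tn a T n..t - Tn a T n} - {tt a (Suc j) - Tn a T n}"
  then show "zhat h a T X Y (Tn a T n + s) = scaled_drift n j"
    using assms by (intro zhat_eq_scaled_drift) auto
next
  show "((\<lambda>s. scaled_drift n j) has_integral (t - tt a j) *\<^sub>R scaled_drift n j)
      {tt a j - Tn a T n..t - Tn a T n}"
    using has_integral_const_real[of "scaled_drift n j" "tt a j - Tn a T n" "t - Tn a T n"] assms
    by simp
qed auto

lemma zhat_has_integral:
  assumes "Nidx a T n \<le> j" "j < Nidx a T (Suc n)" "tt a j \<le> t" "t \<le> tt a (Suc j)"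
  shows "((\<lambda>s. zhat h a T X Y (Tn a T n + s)) has_integral
     ((\<Sum>i\<in>{Nidx a T n..<j}. a i *\<^sub>R scaled_drift n i) + (t - tt a j) *\<^sub>R scaled_drift n j))
     {0 .. t - Tn a T n}"
  using assms
proof (induction j arbitrary: t rule: dec_induct)
  case base
  then show ?case using zhat_has_integral_step[of n "Nidx a T n" t] by (simp add: Tn_def)
next
  case (step j)
  have IH: "((\<lambda>s. zhat h a T X Y (Tn a T n + s)) has_integral
     ((\<Sum>i\<in>{Nidx a T n..<j}. a i *\<^sub>R scaled_drift n i) + a j *\<^sub>R scaled_drift n j))
     {0 .. tt a (Suc j) - Tn a T n}"
    using step.IH[of "tt a (Suc j)"] step.prems step.hyps a_pos[of j] by (simp add: tt_Suc)
  have "0 \<le> tt a (Suc j) - Tn a T n"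
    using step.hyps tt_le_iff[of "Nidx a T n" "Suc j"] by (simp add: Tn_def)
  from has_integral_combine[OF this _ IH zhat_has_integral_step[of n "Suc j" t]]
  show ?case using step.prems step.hyps by (simp add: add.assoc)
qed

lemma xn_eq:
  "xn h a T X Y n t = X (Nidx a T n) /\<^sub>R scale n + integral {0..t} (\<lambda>s. zhat h a T X Y (Tn a T n + s))"
  using xhat_tt[of n "Nidx a T n" X] Nidx_less_Suc[of n] by (simp add: xn_def Tn_def)

lemma xhat_left_limit:
  "Lim (at_left (Tn a T (Suc n))) (xhat a T X) = X (Nidx a T (Suc n)) /\<^sub>R scale n"
proof -
  let ?N' = "Nidx a T (Suc n)"
  obtain j where j: "?N' = Suc j" "Nidx a T n \<le> j" by (rule Nidx_Suc_eq_Suc)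
  define g where "g \<tau> = (X j + ((\<tau> - tt a j) / a j) *\<^sub>R (X ?N' - X j)) /\<^sub>R scale n" for \<tau>
  have "(g \<longlongrightarrow> g (tt a ?N')) (at_left (tt a ?N'))"
    unfolding g_def using a_pos[of j] by (intro tendsto_intros) auto
  moreover have "g (tt a ?N') = X ?N' /\<^sub>R scale n"
    using a_pos[of j] by (simp add: g_def j tt_Suc)
  moreover have "eventually (\<lambda>\<tau>. g \<tau> = xhat a T X \<tau>) (at_left (tt a ?N'))"
  proof -
    have "eventually (\<lambda>\<tau>. \<tau> \<in> {tt a j<..<tt a ?N'}) (at_left (tt a ?N'))"
      by (rule eventually_at_left_real) (simp add: j)
    then show ?thesis
    proof (rule eventually_mono)
      fix \<tau> assume \<tau>: "\<tau> \<in> {tt a j<..<tt a ?N'}"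
      have "tt a (Nidx a T n) \<le> tt a j" using j(2) by simp
      then have "tt a (Nidx a T n) \<le> \<tau>" using \<tau> by (simp del: tt_le_iff)
      then have "blk a T \<tau> = n" using \<tau> by (intro blk_eq) (auto simp: Tn_def)
      moreover have "idx a \<tau> = j" using \<tau> j by (intro idx_eq) auto
      ultimately show "g \<tau> = xhat a T X \<tau>" by (simp add: g_def xhat_def xbar_def j)
    qed
  qed
  ultimately have "(xhat a T X \<longlongrightarrow> X ?N' /\<^sub>R scale n) (at_left (Tn a T (Suc n)))"
    unfolding Tn_def by (metis Lim_transform_eventually)
  then show ?thesis by (intro tendsto_Lim) auto
qed

lemma xn_deviation_interior:
  assumes "0 \<le> t" "Tn a T n + t < Tn a T (Suc n)"
  obtains m \<theta> where "Nidx a T n \<le> m" "m < Nidx a T (Suc n)" "0 \<le> \<theta>" "\<theta> \<le> 1"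
    "xn h a T X Y n t - xhat_blk a T X n t = - ((1 - \<theta>) *\<^sub>R noise_sum n m + \<theta> *\<^sub>R noise_sum n (Suc m))"
proof -
  define \<tau> where "\<tau> = Tn a T n + t"
  define m where "m = idx a \<tau>"
  have "0 \<le> \<tau>" using assms(1) tt_nonneg by (simp add: \<tau>_def Tn_def)
  then have m: "tt a m \<le> \<tau>" "\<tau> < tt a (Suc m)" using idx_bounds by (auto simp: m_def)
  have "tt a (Nidx a T n) < tt a (Suc m)" using m assms(1) by (simp add: \<tau>_def Tn_def del: tt_less_iff)
  then have mN: "Nidx a T n \<le> m" by simp
  have "tt a m < tt a (Nidx a T (Suc n))" using m assms(2) by (simp add: \<tau>_def Tn_def del: tt_less_iff)
  then have mN': "m < Nidx a T (Suc n)" by simp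
  define \<theta> where "\<theta> = (\<tau> - tt a m) / a m"
  have \<theta>: "\<theta> * a m = \<tau> - tt a m" "0 \<le> \<theta>" "\<theta> \<le> 1"
    using m a_pos[of m] by (auto simp: \<theta>_def tt_Suc field_simps)
  have I: "integral {0..t} (\<lambda>s. zhat h a T X Y (Tn a T n + s))
     = (\<Sum>i\<in>{Nidx a T n..<m}. a i *\<^sub>R scaled_drift n i) + (\<tau> - tt a m) *\<^sub>R scaled_drift n m"
    using zhat_has_integral[OF mN mN' m(1)] m(2) by (simp add: \<tau>_def integral_unique)
  have "blk a T \<tau> = n" using assms by (intro blk_eq) (auto simp: \<tau>_def)
  then have "xhat_blk a T X n t = (X m + \<theta> *\<^sub>R (X (Suc m) - X m)) /\<^sub>R scale n"
    using assms(2) by (simp add: xhat_blk_def xhat_def xbar_def Let_def \<tau>_def[symmetric]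
        m_def[symmetric] \<theta>_def[symmetric])
  then have xb: "xhat_blk a T X n t = X m /\<^sub>R scale n + \<theta> *\<^sub>R (X (Suc m) /\<^sub>R scale n - X m /\<^sub>R scale n)"
    by (simp add: scaleR_add_right scaleR_diff_right mult.commute[of "inverse (scale n)"])
  have "X (Suc m) /\<^sub>R scale n = X (Nidx a T n) /\<^sub>R scale n + (\<Sum>i\<in>{Nidx a T n..<m}. a i *\<^sub>R scaled_drift n i)
      + a m *\<^sub>R scaled_drift n m + noise_sum n (Suc m)"
    using scaled_iterate_eq[of n "Suc m"] mN by (simp add: algebra_simps)
  from convex_combination_error_eq[OF scaled_iterate_eq[OF mN] this \<theta>(1)]
  have "xn h a T X Y n t - xhat_blk a T X n t = - ((1 - \<theta>) *\<^sub>R noise_sum n m + \<theta> *\<^sub>R noise_sum n (Suc m))"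
    by (simp add: xn_eq I xb)
  with mN mN' \<theta>(2,3) that show ?thesis by blast
qed

lemma xn_deviation_endpoint:
  assumes "Tn a T n + t = Tn a T (Suc n)"
  shows "xn h a T X Y n t - xhat_blk a T X n t = - noise_sum n (Nidx a T (Suc n))"
proof -
  obtain j where j: "Nidx a T (Suc n) = Suc j" "Nidx a T n \<le> j" by (rule Nidx_Suc_eq_Suc)
  have t: "t = tt a (Suc j) - Tn a T n" using assms j by (simp add: Tn_def)
  have "((\<lambda>s. zhat h a T X Y (Tn a T n + s)) has_integral
      ((\<Sum>i\<in>{Nidx a T n..<j}. a i *\<^sub>R scaled_drift n i) + a j *\<^sub>R scaled_drift n j)) {0..t}"
    using zhat_has_integral[of n j "tt a (Suc j)"] j a_pos[of j] unfolding t by (simp add: tt_Suc)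
  then have "integral {0..t} (\<lambda>s. zhat h a T X Y (Tn a T n + s))
      = (\<Sum>i\<in>{Nidx a T n..<Nidx a T (Suc n)}. a i *\<^sub>R scaled_drift n i)"
    using j by (simp add: integral_unique)
  moreover have "xhat_blk a T X n t = X (Nidx a T (Suc n)) /\<^sub>R scale n"
    using assms xhat_left_limit by (simp add: xhat_blk_def)
  ultimately show ?thesis
    using scaled_iterate_eq[of n "Nidx a T (Suc n)"] Nidx_less_Suc[of n] by (simp add: xn_eq)
qed

lemma xn_deviation_le:
  assumes noise: "\<And>m. m \<in> {Nidx a T n..Nidx a T (Suc n)} \<Longrightarrow> norm (noise_sum n m) \<le> B"
    and t: "0 \<le> t" "t \<le> T"
  shows "norm (xn h a T X Y n t - xhat_blk a T X n t) \<le> B"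
proof (cases "Tn a T n + t = Tn a T (Suc n)")
  case True
  then show ?thesis using noise Nidx_less_Suc[of n] by (simp add: xn_deviation_endpoint)
next
  case False
  then have "Tn a T n + t < Tn a T (Suc n)" using Nidx_Suc_bounds(1)[of n] t by (simp add: Tn_def)
  then obtain m \<theta> where m: "Nidx a T n \<le> m" "m < Nidx a T (Suc n)" and \<theta>: "0 \<le> \<theta>" "\<theta> \<le> 1"
    and eq: "xn h a T X Y n t - xhat_blk a T X n t = - ((1 - \<theta>) *\<^sub>R noise_sum n m + \<theta> *\<^sub>R noise_sum n (Suc m))"
    using xn_deviation_interior t(1) by blast
  have "norm ((1 - \<theta>) *\<^sub>R noise_sum n m + \<theta> *\<^sub>R noise_sum n (Suc m))
      \<le> (1 - \<theta>) * norm (noise_sum n m) + \<theta> * norm (noise_sum n (Suc m))"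
    using \<theta> norm_triangle_ineq[of "(1 - \<theta>) *\<^sub>R noise_sum n m" "\<theta> *\<^sub>R noise_sum n (Suc m)"] by simp
  also have "\<dots> \<le> (1 - \<theta>) * B + \<theta> * B"
    using \<theta> m noise[of m] noise[of "Suc m"] by (intro add_mono mult_left_mono) auto
  also have "\<dots> = B" by (simp add: algebra_simps)
  finally show ?thesis by (simp only: eq norm_minus_cancel)
qed

lemma sup_xn_deviation_le:
  assumes "\<And>m. m \<in> {Nidx a T n..Nidx a T (Suc n)} \<Longrightarrow> norm (noise_sum n m) \<le> B"
  shows "\<bar>SUP t\<in>{0..T}. norm (xn h a T X Y n t - xhat_blk a T X n t)\<bar> \<le> B"
proof -
  let ?f = "\<lambda>t. norm (xn h a T X Y n t - xhat_blk a T X n t)"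
  have f: "?f t \<le> B" if "t \<in> {0..T}" for t
    using that by (intro xn_deviation_le assms) auto
  have "?f 0 \<le> (SUP t\<in>{0..T}. ?f t)"
    using T_pos f by (intro cSUP_upper bdd_aboveI2[where M=B]) auto
  moreover have "(SUP t\<in>{0..T}. ?f t) \<le> B"
    using T_pos f by (intro cSUP_least) auto
  ultimately show ?thesis by (smt (verit) norm_ge_zero)
qed

end

section \<open>Discrete Gronwall inequality and truncation\<close>

lemma prod_one_plus_telescope:
  fixes b :: "nat \<Rightarrow> 'a::comm_ring_1"
  shows "N \<le> j \<Longrightarrow> (\<Prod>i\<in>{N..<j}. 1 + b i) = 1 + (\<Sum>i\<in>{N..<j}. b i * (\<Prod>k\<in>{N..<i}. 1 + b k))"
proof (induction j rule: dec_induct)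
  case (step j)
  then show ?case by (simp add: algebra_simps)
qed simp

lemma prod_one_plus_le_exp_sum:
  fixes b :: "nat \<Rightarrow> real"
  assumes "\<And>i. i \<in> I \<Longrightarrow> b i \<ge> 0"
  shows "(\<Prod>i\<in>I. 1 + b i) \<le> exp (\<Sum>i\<in>I. b i)"
proof (cases "finite I")
  case True
  have "(\<Prod>i\<in>I. 1 + b i) \<le> (\<Prod>i\<in>I. exp (b i))"
    using assms by (intro prod_mono) (auto simp: exp_ge_add_one_self)
  then show ?thesis using True by (simp add: exp_sum)
qed simp

text \<open>Discrete Gronwall inequality, in a form where the recursive bound at \<open>j\<close> may itself depend
  on the conclusion for all earlier indices.\<close>

lemma discrete_gronwall:
  fixes u b :: "nat \<Rightarrow> real"
  assumes b: "\<And>i. b i \<ge> 0"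
    and step: "\<And>j. N \<le> j \<Longrightarrow> j \<le> N' \<Longrightarrow>
        (\<And>i. N \<le> i \<Longrightarrow> i < j \<Longrightarrow> u i \<le> A * (\<Prod>k\<in>{N..<i}. 1 + b k)) \<Longrightarrow>
        u j \<le> A + (\<Sum>i\<in>{N..<j}. b i * u i)"
    and j: "N \<le> j" "j \<le> N'"
  shows "u j \<le> A * (\<Prod>i\<in>{N..<j}. 1 + b i)"
  using j
proof (induction j rule: less_induct)
  case (less j)
  have IH: "u i \<le> A * (\<Prod>k\<in>{N..<i}. 1 + b k)" if "N \<le> i" "i < j" for i
    using less that by auto
  have "u j \<le> A + (\<Sum>i\<in>{N..<j}. b i * u i)"
    using less.prems IH by (rule step)
  also have "\<dots> \<le> A + (\<Sum>i\<in>{N..<j}. b i * (A * (\<Prod>k\<in>{N..<i}. 1 + b k)))"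
    using IH b by (intro add_left_mono sum_mono mult_left_mono) auto
  also have "\<dots> = A * (\<Prod>i\<in>{N..<j}. 1 + b i)"
    using prod_one_plus_telescope[OF less.prems(1), of b] by (simp add: algebra_simps sum_distrib_left)
  finally show ?case .
qed

text \<open>The constant \<open>2\<close> bounds the rescaled initial point and the noise, \<open>C0 (T + 1)\<close> the drift at
  the origin over a block (which has length \<open>< T + 1\<close>), and \<open>exp (L (T + 1))\<close> is the Gronwall factor.\<close>

definition gronwall_radius :: "real \<Rightarrow> real \<Rightarrow> real \<Rightarrow> real" where
  "gronwall_radius C0 L T = (2 + C0 * (T + 1)) * exp (L * (T + 1))"

text \<open>The noise of block \<open>n\<close>, switched off wherever the iterate has left the ball of radius
  \<open>R r(n)\<close>; unlike the untruncated noise it has conditional variance \<open>O(a(i)\<^sup>2)\<close>.\<close>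

definition truncated_noise_sum ::
    "(nat \<Rightarrow> real) \<Rightarrow> real \<Rightarrow> (nat \<Rightarrow> 'b::real_normed_vector) \<Rightarrow> (nat \<Rightarrow> 'b) \<Rightarrow>
      real \<Rightarrow> nat \<Rightarrow> nat \<Rightarrow> 'b"
  where "truncated_noise_sum a T X E R n m = (\<Sum>i\<in>{Nidx a T n..<m}.
      (if norm (X i) \<le> R * rr a T X n then a i / rr a T X n else 0) *\<^sub>R E (Suc i))"

context recursion_path
begin

lemma noise_sum_eq_truncated:
  assumes "\<And>i. Nidx a T n \<le> i \<Longrightarrow> i < m \<Longrightarrow> norm (X i) \<le> R * scale n"
  shows "noise_sum n m = truncated_noise_sum a T X E R n m"
  using assms unfolding noise_sum_def truncated_noise_sum_def by (intro sum.cong) auto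

end

locale linear_growth_path = recursion_path +
  fixes C0 L :: real
  assumes C0_nonneg: "C0 \<ge> 0" and L_nonneg: "L \<ge> 0"
    and linear_growth: "\<And>k. norm (h (X k) (Y k)) \<le> C0 + L * norm (X k)"
begin

lemma gronwall_bound_le_radius:
  assumes "Nidx a T n \<le> j" "j \<le> Nidx a T (Suc n)"
  shows "(2 + C0 * (T + 1)) * (\<Prod>i\<in>{Nidx a T n..<j}. 1 + L * a i) \<le> gronwall_radius C0 L T"
proof -
  have "(\<Prod>i\<in>{Nidx a T n..<j}. 1 + L * a i) \<le> exp (\<Sum>i\<in>{Nidx a T n..<j}. L * a i)"
    using L_nonneg a_pos by (intro prod_one_plus_le_exp_sum) (simp add: less_imp_le)
  also have "\<dots> = exp (L * (\<Sum>i\<in>{Nidx a T n..<j}. a i))"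
    by (simp add: sum_distrib_left)
  also have "\<dots> \<le> exp (L * (T + 1))"
    using sum_step_sizes_block_le[OF assms] L_nonneg by (intro exp_mono mult_left_mono)
  finally show ?thesis
    unfolding gronwall_radius_def using C0_nonneg T_pos by (intro mult_left_mono) auto
qed

lemma norm_scaled_drift_le: "norm (scaled_drift n i) \<le> C0 + L * (norm (X i) / scale n)"
proof -
  have r: "scale n \<ge> 1" by (rule scale_ge_1)
  have "norm (scaled_drift n i) = norm (h (X i) (Y i)) / scale n"
    using r by (simp add: scaled_drift_def divide_inverse mult.commute)
  also have "\<dots> \<le> (C0 + L * norm (X i)) / scale n"
    using r linear_growth[of i] by (intro divide_right_mono) auto
  also have "\<dots> \<le> C0 + L * (norm (X i) / scale n)"
    using r C0_nonneg by (simp add: add_divide_distrib divide_le_eq mult_le_cancel_left1)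
  finally show ?thesis .
qed

lemma scaled_iterate_norm_step:
  assumes j: "Nidx a T n \<le> j" "j \<le> Nidx a T (Suc n)" and noise: "norm (noise_sum n j) \<le> 1"
  shows "norm (X j) / scale n \<le> (2 + C0 * (T + 1)) + (\<Sum>i\<in>{Nidx a T n..<j}. L * a i * (norm (X i) / scale n))"
proof -
  let ?N = "Nidx a T n"
  have r: "scale n \<ge> 1" by (rule scale_ge_1)
  have drift: "norm (a i *\<^sub>R scaled_drift n i) \<le> a i * C0 + L * a i * (norm (X i) / scale n)" for i
    using mult_left_mono[OF norm_scaled_drift_le[of n i], of "a i"] a_pos[of i] by (simp add: algebra_simps)
  have drifts: "norm (\<Sum>i\<in>{?N..<j}. a i *\<^sub>R scaled_drift n i)
      \<le> (\<Sum>i\<in>{?N..<j}. a i * C0 + L * a i * (norm (X i) / scale n))"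
    by (rule order_trans[OF norm_sum sum_mono]) (rule drift)
  have start: "norm (X ?N /\<^sub>R scale n) \<le> 1"
    using r by (simp add: rr_eq field_simps)
  have "norm (X j) / scale n
      = norm (X ?N /\<^sub>R scale n + (\<Sum>i\<in>{?N..<j}. a i *\<^sub>R scaled_drift n i) + noise_sum n j)"
    using r by (simp add: scaled_iterate_eq[OF j(1), symmetric] divide_inverse mult.commute)
  also have "\<dots> \<le> norm (X ?N /\<^sub>R scale n + (\<Sum>i\<in>{?N..<j}. a i *\<^sub>R scaled_drift n i)) + norm (noise_sum n j)"
    by (rule norm_triangle_ineq)
  also have "\<dots> \<le> norm (X ?N /\<^sub>R scale n) + norm (\<Sum>i\<in>{?N..<j}. a i *\<^sub>R scaled_drift n i) + norm (noise_sum n j)"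
    by (intro add_right_mono norm_triangle_ineq)
  also have "\<dots> \<le> 1 + (\<Sum>i\<in>{?N..<j}. a i * C0 + L * a i * (norm (X i) / scale n)) + 1"
    using start drifts noise by linarith
  also have "\<dots> = 2 + C0 * (\<Sum>i\<in>{?N..<j}. a i) + (\<Sum>i\<in>{?N..<j}. L * a i * (norm (X i) / scale n))"
    by (simp add: sum.distrib sum_distrib_left algebra_simps)
  also have "\<dots> \<le> (2 + C0 * (T + 1)) + (\<Sum>i\<in>{?N..<j}. L * a i * (norm (X i) / scale n))"
    using mult_left_mono[OF sum_step_sizes_block_le[OF j] C0_nonneg] by linarith
  finally show ?thesis .
qed

text \<open>If the truncated noise stays small, Gronwall keeps the iterates inside the truncation radius,
  so the truncation never takes effect.\<close>

lemma noise_sum_eq_truncated_if_small: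
  assumes small: "\<And>m. m \<in> {Nidx a T n..Nidx a T (Suc n)} \<Longrightarrow>
      norm (truncated_noise_sum a T X E (gronwall_radius C0 L T) n m) \<le> 1"
    and m: "m \<in> {Nidx a T n..Nidx a T (Suc n)}"
  shows "noise_sum n m = truncated_noise_sum a T X E (gronwall_radius C0 L T) n m"
proof -
  let ?N = "Nidx a T n" and ?N' = "Nidx a T (Suc n)" and ?R = "gronwall_radius C0 L T"
  let ?P = "\<lambda>j. (2 + C0 * (T + 1)) * (\<Prod>i\<in>{?N..<j}. 1 + L * a i)"
  have inside: "norm (X i) \<le> ?R * scale n" if "norm (X i) / scale n \<le> ?P i" "?N \<le> i" "i \<le> ?N'" for i
  proof -
    have "norm (X i) \<le> ?P i * scale n" using that(1) scale_ge_1[of n] by (simp add: divide_le_eq)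
    also have "\<dots> \<le> ?R * scale n"
      using gronwall_bound_le_radius[OF that(2,3)] scale_ge_1[of n] by (intro mult_right_mono) auto
    finally show ?thesis .
  qed
  have bound: "norm (X j) / scale n \<le> ?P j" if "?N \<le> j" "j \<le> ?N'" for j
  proof (rule discrete_gronwall[where u="\<lambda>j. norm (X j) / scale n" and b="\<lambda>i. L * a i"])
    fix j assume j: "?N \<le> j" "j \<le> ?N'" and IH: "\<And>i. ?N \<le> i \<Longrightarrow> i < j \<Longrightarrow> norm (X i) / scale n \<le> ?P i"
    have "noise_sum n j = truncated_noise_sum a T X E ?R n j"
      using IH j inside by (intro noise_sum_eq_truncated) auto
    then show "norm (X j) / scale n \<le> (2 + C0 * (T + 1)) + (\<Sum>i\<in>{?N..<j}. L * a i * (norm (X i) / scale n))"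
      using j small[of j] by (intro scaled_iterate_norm_step) auto
  qed (use that L_nonneg a_pos[THEN less_imp_le] in auto)
  show ?thesis
    using m bound inside by (intro noise_sum_eq_truncated) auto
qed

lemma sup_xn_deviation_le_truncated:
  assumes "B \<le> 1" and "\<And>m. m \<in> {Nidx a T n..Nidx a T (Suc n)} \<Longrightarrow>
      norm (truncated_noise_sum a T X E (gronwall_radius C0 L T) n m) \<le> B"
  shows "\<bar>SUP t\<in>{0..T}. norm (xn h a T X Y n t - xhat_blk a T X n t)\<bar> \<le> B"
proof (rule sup_xn_deviation_le)
  have small: "\<And>m. m \<in> {Nidx a T n..Nidx a T (Suc n)} \<Longrightarrow>
      norm (truncated_noise_sum a T X E (gronwall_radius C0 L T) n m) \<le> 1"
    using assms by (blast intro: order_trans)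
  show "norm (noise_sum n m) \<le> B" if "m \<in> {Nidx a T n..Nidx a T (Suc n)}" for m
    using noise_sum_eq_truncated_if_small[OF small that] assms(2)[OF that] by simp
qed

end

section \<open>The stochastic recursion\<close>

lemma Basis_inner_ge_if_norm_ge:
  fixes z :: "'a::euclidean_space"
  assumes "\<epsilon> \<le> norm z"
  shows "\<exists>b\<in>Basis. \<epsilon> / real DIM('a) \<le> \<bar>z \<bullet> b\<bar>"
proof (rule ccontr)
  assume "\<not> ?thesis"
  then have "(\<Sum>b\<in>(Basis::'a set). \<bar>z \<bullet> b\<bar>) < (\<Sum>b\<in>(Basis::'a set). \<epsilon> / real DIM('a))"
    by (intro sum_strict_mono) auto
  with norm_le_l1[of z] assms show False by simp
qed

lemma summable_block_sums:
  fixes f :: "nat \<Rightarrow> real"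
  assumes "mono \<phi>" and f: "\<And>i. f i \<ge> 0" "summable f"
  shows "summable (\<lambda>n. \<Sum>i\<in>{\<phi> n..<\<phi> (Suc n)}. f i)"
proof (rule summableI_nonneg_bounded[where x="suminf f"])
  show "0 \<le> (\<Sum>i\<in>{\<phi> n..<\<phi> (Suc n)}. f i)" for n by (intro sum_nonneg f)
  fix P
  have "(\<Sum>n<P. \<Sum>i\<in>{\<phi> n..<\<phi> (Suc n)}. f i) = (\<Sum>i\<in>{\<phi> 0..<\<phi> P}. f i)"
  proof (induction P)
    case (Suc P)
    then show ?case
      using monoD[OF assms(1), of 0 P] monoD[OF assms(1), of P "Suc P"]
      by (simp add: sum.atLeastLessThan_concat)
  qed simp
  also have "\<dots> \<le> (\<Sum>i<\<phi> P. f i)" using f by (intro sum_mono2) auto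
  also have "\<dots> \<le> suminf f" using f by (intro sum_le_suminf) auto
  finally show "(\<Sum>n<P. \<Sum>i\<in>{\<phi> n..<\<phi> (Suc n)}. f i) \<le> suminf f" .
qed

locale stochastic_approximation =
  fixes M :: "'a measure" and F :: "nat \<Rightarrow> 'a measure"
    and S :: "'c::metric_space set"
    and h :: "'b::euclidean_space \<Rightarrow> 'c \<Rightarrow> 'b"
    and a :: "nat \<Rightarrow> real" and L K T :: real
    and x :: "nat \<Rightarrow> 'a \<Rightarrow> 'b" and y :: "nat \<Rightarrow> 'a \<Rightarrow> 'c" and Mn :: "nat \<Rightarrow> 'a \<Rightarrow> 'b"
  assumes S_compact: "compact S"
    and h_cont: "continuous_on (UNIV \<times> S) (\<lambda>(u, v). h u v)"
    and L_pos: "L > 0"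
    and h_lip: "\<And>u1 u2 v. v \<in> S \<Longrightarrow> norm (h u1 v - h u2 v) \<le> L * norm (u1 - u2)"
    and a_pos: "\<And>n. a n > 0"
    and a_div: "\<not> summable a"
    and a_sq: "summable (\<lambda>n. (a n)\<^sup>2)"
    and a_le1: "\<And>n. a n \<le> 1"
    and prob: "prob_space M"
    and filt: "filtration M F"
    and y_S: "\<And>n \<omega>. \<omega> \<in> space M \<Longrightarrow> y n \<omega> \<in> S"
    and y_adapt: "\<And>n. y n \<in> borel_measurable (F n)"
    and x0_meas: "x 0 \<in> borel_measurable (F 0)"
    and M_adapt: "\<And>n. Mn (Suc n) \<in> borel_measurable (F (Suc n))"
    and M_sq_int: "\<And>n. integrable M (\<lambda>\<omega>. (norm (Mn (Suc n) \<omega>))\<^sup>2)"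
    and M_mds: "\<And>n b. b \<in> Basis \<Longrightarrow>
        AE \<omega> in M. real_cond_exp M (F n) (\<lambda>\<omega>. Mn (Suc n) \<omega> \<bullet> b) \<omega> = 0"
    and M_var: "\<And>n. AE \<omega> in M.
        real_cond_exp M (F n) (\<lambda>\<omega>. (norm (Mn (Suc n) \<omega>))\<^sup>2) \<omega> \<le> K * (1 + (norm (x n \<omega>))\<^sup>2)"
    and x_rec: "\<And>n \<omega>. \<omega> \<in> space M \<Longrightarrow>
        x (Suc n) \<omega> = x n \<omega> + a n *\<^sub>R (h (x n \<omega>) (y n \<omega>) + Mn (Suc n) \<omega>)"
    and T_pos: "T > 0"
begin

sublocale step_sizes a T
  using a_pos a_div a_le1 T_pos by unfold_locales

sublocale prob_space M
  by (rule prob)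

lemma h_continuous_on: "continuous_on S (h u)"
proof -
  have "continuous_on S ((\<lambda>(u, v). h u v) \<circ> (\<lambda>v. (u, v)))"
    by (rule continuous_on_compose) (auto intro!: continuous_intros intro: continuous_on_subset[OF h_cont])
  then show ?thesis by (simp add: o_def)
qed

lemma linear_growth:
  obtains C0 where "C0 \<ge> 0" "\<And>u v. v \<in> S \<Longrightarrow> norm (h u v) \<le> C0 + L * norm u"
proof -
  have "compact (h 0 ` S)" using h_continuous_on S_compact by (rule compact_continuous_image)
  then obtain B where B: "B > 0" "\<And>v. v \<in> S \<Longrightarrow> norm (h 0 v) \<le> B"
    using compact_imp_bounded bounded_pos by (metis image_eqI)
  have "norm (h u v) \<le> B + L * norm u" if "v \<in> S" for u v
    using h_lip[OF that, of u 0] norm_triangle_ineq2[of "h u v" "h 0 v"] B(2)[OF that] by simp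
  with B(1) show ?thesis by (intro that[of B]) auto
qed

lemma x_adapted: "x k \<in> borel_measurable (F k)"
proof (induction k)
  case (Suc k)
  have [measurable]: "x k \<in> borel_measurable (F (Suc k))" "Mn (Suc k) \<in> borel_measurable (F (Suc k))"
    using filtration_measurable_mono[OF filt Suc] M_adapt by auto
  have [measurable]: "(\<lambda>\<omega>. h (x k \<omega>) (y k \<omega>)) \<in> borel_measurable (F (Suc k))"
    by (rule borel_measurable_caratheodory[OF h_continuous_on, where L=L])
      (auto simp: dist_norm h_lip filtration_space[OF filt] y_S
        intro: filtration_measurable_mono[OF filt y_adapt])
  have "(\<lambda>\<omega>. x k \<omega> + a k *\<^sub>R (h (x k \<omega>) (y k \<omega>) + Mn (Suc k) \<omega>)) \<in> borel_measurable (F (Suc k))"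
    by measurable
  then show ?case
    by (rule measurable_cong[THEN iffD1, rotated]) (simp add: filtration_space[OF filt] x_rec)
qed (rule x0_meas)

lemma x_borel[measurable]: "x i \<in> borel_measurable M"
  using filtration_measurable[OF filt x_adapted] .

lemma noise_borel[measurable]: "Mn (Suc i) \<in> borel_measurable M"
  using filtration_measurable[OF filt M_adapt] .

abbreviation scale :: "nat \<Rightarrow> 'a \<Rightarrow> real" where
  "scale n \<omega> \<equiv> rr a T (\<lambda>k. x k \<omega>) n"

definition truncation_weight :: "real \<Rightarrow> nat \<Rightarrow> nat \<Rightarrow> 'a \<Rightarrow> real" where
  "truncation_weight R n i \<omega> = (if norm (x i \<omega>) \<le> R * scale n \<omega> then a i / scale n \<omega> else 0)"

lemma truncated_noise_sum_eq:
  "truncated_noise_sum a T (\<lambda>k. x k \<omega>) (\<lambda>k. Mn k \<omega>) R n m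
    = (\<Sum>i\<in>{Nidx a T n..<m}. truncation_weight R n i \<omega> *\<^sub>R Mn (Suc i) \<omega>)"
  by (simp add: truncated_noise_sum_def truncation_weight_def)

lemma scale_ge_1: "scale n \<omega> \<ge> 1"
  by (simp add: rr_eq)

lemma truncation_weight_measurable:
  assumes "Nidx a T n \<le> i"
  shows "truncation_weight R n i \<in> borel_measurable (F i)"
proof -
  have [measurable]: "x (Nidx a T n) \<in> borel_measurable (F i)" "x i \<in> borel_measurable (F i)"
    using filtration_measurable_mono[OF filt x_adapted assms] x_adapted by auto
  show ?thesis unfolding truncation_weight_def rr_eq by measurable
qed

lemma truncation_weight_borel[measurable]: "truncation_weight R n i \<in> borel_measurable M"
  unfolding truncation_weight_def rr_eq by measurable

lemma truncation_weight_abs_le_1: "\<bar>truncation_weight R n i \<omega>\<bar> \<le> 1"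
proof -
  have "a i / scale n \<omega> \<le> a i"
    using a_pos[of i] scale_ge_1[where n=n and \<omega>=\<omega>] by (simp add: divide_le_eq mult_le_cancel_left1)
  then show ?thesis
    using a_pos[of i] a_le1[of i] scale_ge_1[where n=n and \<omega>=\<omega>] by (auto simp: truncation_weight_def)
qed

lemma truncation_weight_square_le:
  "(truncation_weight R n i \<omega>)\<^sup>2 * (1 + (norm (x i \<omega>))\<^sup>2) \<le> (a i)\<^sup>2 * (1 + R\<^sup>2)"
proof (cases "norm (x i \<omega>) \<le> R * scale n \<omega>")
  case True
  let ?r = "scale n \<omega>"
  have r: "?r \<ge> 1" by (rule scale_ge_1)
  have "(truncation_weight R n i \<omega>)\<^sup>2 * (1 + (norm (x i \<omega>))\<^sup>2) = (a i)\<^sup>2 * (1 / ?r\<^sup>2 + (norm (x i \<omega>) / ?r)\<^sup>2)"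
    using True r by (simp add: truncation_weight_def field_simps power2_eq_square)
  also have "\<dots> \<le> (a i)\<^sup>2 * (1 + R\<^sup>2)"
  proof (intro mult_left_mono add_mono)
    show "1 / ?r\<^sup>2 \<le> 1" using r by (simp add: divide_le_eq one_le_power)
    have "norm (x i \<omega>) / ?r \<le> R" using True r by (simp add: divide_le_eq mult.commute)
    then show "(norm (x i \<omega>) / ?r)\<^sup>2 \<le> R\<^sup>2" using r by (intro power_mono) auto
  qed auto
  finally show ?thesis .
qed (auto simp: truncation_weight_def)

lemma weighted_noise_square_integrable:
  assumes c: "c \<in> borel_measurable M" "\<And>\<omega>. \<bar>c \<omega>\<bar> \<le> 1" and b: "b \<in> Basis"
  shows "integrable M (\<lambda>\<omega>. (c \<omega> * (Mn (Suc i) \<omega> \<bullet> b))\<^sup>2)"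
proof (rule Bochner_Integration.integrable_bound[OF M_sq_int[of i]])
  show "(\<lambda>\<omega>. (c \<omega> * (Mn (Suc i) \<omega> \<bullet> b))\<^sup>2) \<in> borel_measurable M" using c by measurable
  show "AE \<omega> in M. norm ((c \<omega> * (Mn (Suc i) \<omega> \<bullet> b))\<^sup>2) \<le> norm ((norm (Mn (Suc i) \<omega>))\<^sup>2)"
  proof (intro AE_I2)
    fix \<omega>
    have "\<bar>c \<omega> * (Mn (Suc i) \<omega> \<bullet> b)\<bar> \<le> \<bar>Mn (Suc i) \<omega> \<bullet> b\<bar>"
      using c(2)[of \<omega>] by (simp add: abs_mult mult_left_le_one_le)
    also have "\<dots> \<le> norm (Mn (Suc i) \<omega>)" using b by (rule Basis_le_norm)
    finally have "\<bar>c \<omega> * (Mn (Suc i) \<omega> \<bullet> b)\<bar>\<^sup>2 \<le> (norm (Mn (Suc i) \<omega>))\<^sup>2"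
      by (intro power_mono) auto
    then show "norm ((c \<omega> * (Mn (Suc i) \<omega> \<bullet> b))\<^sup>2) \<le> norm ((norm (Mn (Suc i) \<omega>))\<^sup>2)"
      by simp
  qed
qed

lemma weighted_noise_orthogonal:
  assumes c: "c \<in> borel_measurable (F i)" and b: "b \<in> Basis" and g: "g \<in> borel_measurable (F i)"
    and int: "integrable M (\<lambda>\<omega>. g \<omega> * (c \<omega> * (Mn (Suc i) \<omega> \<bullet> b)))"
  shows "(\<integral>\<omega>. g \<omega> * (c \<omega> * (Mn (Suc i) \<omega> \<bullet> b)) \<partial>M) = 0"
proof -
  interpret sigma_finite_subalgebra M "F i"
    by (rule filtration_sigma_finite_subalgebra[OF filt])
  have gc: "(\<lambda>\<omega>. g \<omega> * c \<omega>) \<in> borel_measurable (F i)" using g c by measurable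
  have int': "integrable M (\<lambda>\<omega>. (g \<omega> * c \<omega>) * (Mn (Suc i) \<omega> \<bullet> b))"
    using int by (simp add: mult.assoc)
  have "(\<integral>\<omega>. g \<omega> * (c \<omega> * (Mn (Suc i) \<omega> \<bullet> b)) \<partial>M)
      = (\<integral>\<omega>. (g \<omega> * c \<omega>) * real_cond_exp M (F i) (\<lambda>\<omega>. Mn (Suc i) \<omega> \<bullet> b) \<omega> \<partial>M)"
    using real_cond_exp_intg(2)[OF int' gc] by (simp add: mult.assoc)
  also have "\<dots> = 0"
    by (rule integral_eq_zero_AE) (use M_mds[OF b, of i] in auto)
  finally show ?thesis .
qed

lemma weighted_noise_norm_square_integrable:
  assumes "c \<in> borel_measurable M" "\<And>\<omega>. \<bar>c \<omega>\<bar> \<le> 1"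
  shows "integrable M (\<lambda>\<omega>. (c \<omega>)\<^sup>2 * (norm (Mn (Suc i) \<omega>))\<^sup>2)"
proof (rule Bochner_Integration.integrable_bound[OF M_sq_int[of i]])
  show "AE \<omega> in M. norm ((c \<omega>)\<^sup>2 * (norm (Mn (Suc i) \<omega>))\<^sup>2) \<le> norm ((norm (Mn (Suc i) \<omega>))\<^sup>2)"
    using assms(2) by (intro AE_I2) (auto simp: abs_mult abs_square_le_1 intro!: mult_left_le_one_le)
qed (use assms(1) in measurable)

lemma weighted_noise_variance_le:
  assumes c: "c \<in> borel_measurable (F i)" "\<And>\<omega>. \<bar>c \<omega>\<bar> \<le> 1"
    and B: "\<And>\<omega>. (c \<omega>)\<^sup>2 * (1 + (norm (x i \<omega>))\<^sup>2) \<le> B" and b: "b \<in> Basis"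
  shows "(\<integral>\<omega>. (c \<omega> * (Mn (Suc i) \<omega> \<bullet> b))\<^sup>2 \<partial>M) \<le> \<bar>K\<bar> * B"
proof -
  interpret sigma_finite_subalgebra M "F i"
    by (rule filtration_sigma_finite_subalgebra[OF filt])
  have [measurable]: "c \<in> borel_measurable M" using filtration_measurable[OF filt c(1)] .
  have c2: "(\<lambda>\<omega>. (c \<omega>)\<^sup>2) \<in> borel_measurable (F i)" using c(1) by measurable
  let ?V = "\<lambda>\<omega>. (norm (Mn (Suc i) \<omega>))\<^sup>2"
  have iV: "integrable M (\<lambda>\<omega>. (c \<omega>)\<^sup>2 * ?V \<omega>)"
    using c(2) by (rule weighted_noise_norm_square_integrable[rotated]) measurable
  have bound: "\<bar>(c \<omega>)\<^sup>2 * (K * (1 + (norm (x i \<omega>))\<^sup>2))\<bar> \<le> \<bar>K\<bar> * B" for \<omega>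
    using mult_left_mono[OF B[of \<omega>], of "\<bar>K\<bar>"] by (simp add: abs_mult ac_simps)
  have iK: "integrable M (\<lambda>\<omega>. (c \<omega>)\<^sup>2 * (K * (1 + (norm (x i \<omega>))\<^sup>2)))"
  proof (rule Bochner_Integration.integrable_bound[where f="\<lambda>_. \<bar>K\<bar> * B"])
    show "AE \<omega> in M. norm ((c \<omega>)\<^sup>2 * (K * (1 + (norm (x i \<omega>))\<^sup>2))) \<le> norm (\<bar>K\<bar> * B)"
      using bound by (intro AE_I2) (metis abs_ge_self order_trans real_norm_def)
  qed (simp, measurable)
  have "(\<integral>\<omega>. (c \<omega> * (Mn (Suc i) \<omega> \<bullet> b))\<^sup>2 \<partial>M) \<le> (\<integral>\<omega>. (c \<omega>)\<^sup>2 * ?V \<omega> \<partial>M)"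
  proof (rule integral_mono[OF weighted_noise_square_integrable[OF filtration_measurable[OF filt c(1)] c(2) b] iV])
    fix \<omega>
    have "\<bar>Mn (Suc i) \<omega> \<bullet> b\<bar>\<^sup>2 \<le> ?V \<omega>"
      using Basis_le_norm[OF b] by (intro power_mono) auto
    then show "(c \<omega> * (Mn (Suc i) \<omega> \<bullet> b))\<^sup>2 \<le> (c \<omega>)\<^sup>2 * ?V \<omega>"
      unfolding power_mult_distrib by (intro mult_left_mono) auto
  qed
  also have "\<dots> = (\<integral>\<omega>. (c \<omega>)\<^sup>2 * real_cond_exp M (F i) ?V \<omega> \<partial>M)"
    by (rule real_cond_exp_intg(2)[OF iV c2, symmetric]) measurable
  also have "\<dots> \<le> (\<integral>\<omega>. (c \<omega>)\<^sup>2 * (K * (1 + (norm (x i \<omega>))\<^sup>2)) \<partial>M)"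
  proof (rule integral_mono_AE[OF real_cond_exp_intg(1)[OF iV c2] iK])
    show "AE \<omega> in M. (c \<omega>)\<^sup>2 * real_cond_exp M (F i) ?V \<omega> \<le> (c \<omega>)\<^sup>2 * (K * (1 + (norm (x i \<omega>))\<^sup>2))"
      using M_var[of i] by eventually_elim (rule mult_left_mono, auto)
  qed measurable
  also have "\<dots> \<le> (\<integral>\<omega>. \<bar>K\<bar> * B \<partial>M)"
    by (intro integral_mono iK) (simp_all add: abs_le_D1[OF bound])
  also have "\<dots> = \<bar>K\<bar> * B" by (simp add: prob_space)
  finally show ?thesis .
qed

lemma orthogonal_increments_truncated_noise:
  assumes b: "b \<in> Basis"
  shows "orthogonal_increments M F (\<lambda>i \<omega>. truncation_weight R n i \<omega> * (Mn (Suc i) \<omega> \<bullet> b))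
    (Nidx a T n) (Nidx a T (Suc n))"
proof (intro orthogonal_increments.intro orthogonal_increments_axioms.intro)
  fix i assume i: "Nidx a T n \<le> i" "i < Nidx a T (Suc n)"
  have w: "truncation_weight R n i \<in> borel_measurable (F i)"
    using truncation_weight_measurable i(1) by blast
  have [measurable]: "truncation_weight R n i \<in> borel_measurable (F (Suc i))"
    using filtration_measurable_mono[OF filt w, where j="Suc i"] by simp
  have [measurable]: "Mn (Suc i) \<in> borel_measurable (F (Suc i))"
    by (rule M_adapt)
  show "(\<lambda>\<omega>. truncation_weight R n i \<omega> * (Mn (Suc i) \<omega> \<bullet> b)) \<in> borel_measurable (F (Suc i))"
    by measurable
  show "integrable M (\<lambda>\<omega>. (truncation_weight R n i \<omega> * (Mn (Suc i) \<omega> \<bullet> b))\<^sup>2)"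
    using truncation_weight_borel truncation_weight_abs_le_1 b by (rule weighted_noise_square_integrable)
  show "(\<integral>\<omega>. g \<omega> * (truncation_weight R n i \<omega> * (Mn (Suc i) \<omega> \<bullet> b)) \<partial>M) = 0"
    if "g \<in> borel_measurable (F i)"
      "integrable M (\<lambda>\<omega>. g \<omega> * (truncation_weight R n i \<omega> * (Mn (Suc i) \<omega> \<bullet> b)))" for g
    using w b that by (rule weighted_noise_orthogonal)
qed (fact prob filt)+

lemma truncated_noise_coordinate_exceedance_le:
  assumes \<epsilon>: "\<epsilon> > 0" and b: "b \<in> Basis"
  shows "measure M {\<omega>\<in>space M. \<exists>m\<in>{Nidx a T n..Nidx a T (Suc n)}.
      \<epsilon> \<le> \<bar>\<Sum>i\<in>{Nidx a T n..<m}. truncation_weight R n i \<omega> * (Mn (Suc i) \<omega> \<bullet> b)\<bar>}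
    \<le> (\<Sum>i\<in>{Nidx a T n..<Nidx a T (Suc n)}. (a i)\<^sup>2) * (\<bar>K\<bar> * (1 + R\<^sup>2)) / \<epsilon>\<^sup>2"
proof -
  let ?N = "Nidx a T n" and ?N' = "Nidx a T (Suc n)"
    and ?Z = "\<lambda>i \<omega>. truncation_weight R n i \<omega> * (Mn (Suc i) \<omega> \<bullet> b)"
  interpret orthogonal_increments M F ?Z ?N ?N'
    using b by (rule orthogonal_increments_truncated_noise)
  have "measure M {\<omega>\<in>space M. \<exists>m\<in>{?N..?N'}. \<epsilon> \<le> \<bar>partial_sum m \<omega>\<bar>}
      \<le> (\<Sum>i\<in>{?N..<?N'}. \<integral>\<omega>. (?Z i \<omega>)\<^sup>2 \<partial>M) / \<epsilon>\<^sup>2"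
    using \<epsilon> Nidx_mono[of n "Suc n"] by (intro maximal_inequality) auto
  also have "\<dots> \<le> (\<Sum>i\<in>{?N..<?N'}. (a i)\<^sup>2 * (\<bar>K\<bar> * (1 + R\<^sup>2))) / \<epsilon>\<^sup>2"
  proof (intro divide_right_mono sum_mono)
    fix i assume "i \<in> {?N..<?N'}"
    then have "truncation_weight R n i \<in> borel_measurable (F i)"
      using truncation_weight_measurable by simp
    from weighted_noise_variance_le[OF this truncation_weight_abs_le_1 truncation_weight_square_le b]
    show "(\<integral>\<omega>. (?Z i \<omega>)\<^sup>2 \<partial>M) \<le> (a i)\<^sup>2 * (\<bar>K\<bar> * (1 + R\<^sup>2))"
      by (simp add: ac_simps)
  qed simp
  finally show ?thesis
    by (simp add: partial_sum_def sum_distrib_right)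
qed

lemma truncated_noise_exceedance_le:
  assumes \<epsilon>: "\<epsilon> > 0"
  shows "measure M {\<omega>\<in>space M. \<exists>m\<in>{Nidx a T n..Nidx a T (Suc n)}.
      \<epsilon> \<le> norm (truncated_noise_sum a T (\<lambda>k. x k \<omega>) (\<lambda>k. Mn k \<omega>) R n m)}
    \<le> real DIM('b) ^ 3 * (\<bar>K\<bar> * (1 + R\<^sup>2)) / \<epsilon>\<^sup>2 * (\<Sum>i\<in>{Nidx a T n..<Nidx a T (Suc n)}. (a i)\<^sup>2)"
proof -
  define d where "d = real DIM('b)"
  have d: "d > 0" by (simp add: d_def)
  define E where "E b = {\<omega>\<in>space M. \<exists>m\<in>{Nidx a T n..Nidx a T (Suc n)}.
      \<epsilon> / d \<le> \<bar>\<Sum>i\<in>{Nidx a T n..<m}. truncation_weight R n i \<omega> * (Mn (Suc i) \<omega> \<bullet> b)\<bar>}" for b :: 'b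
  have E_sets: "E b \<in> sets M" for b unfolding E_def by measurable
  have "{\<omega>\<in>space M. \<exists>m\<in>{Nidx a T n..Nidx a T (Suc n)}.
      \<epsilon> \<le> norm (truncated_noise_sum a T (\<lambda>k. x k \<omega>) (\<lambda>k. Mn k \<omega>) R n m)} \<subseteq> (\<Union>b\<in>Basis. E b)"
    using Basis_inner_ge_if_norm_ge
    by (fastforce simp: E_def d_def truncated_noise_sum_eq inner_sum_left)
  then have "measure M {\<omega>\<in>space M. \<exists>m\<in>{Nidx a T n..Nidx a T (Suc n)}.
      \<epsilon> \<le> norm (truncated_noise_sum a T (\<lambda>k. x k \<omega>) (\<lambda>k. Mn k \<omega>) R n m)} \<le> measure M (\<Union>b\<in>Basis. E b)"
    using E_sets by (intro finite_measure_mono) auto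
  also have "\<dots> \<le> (\<Sum>b\<in>Basis. measure M (E b))"
    using E_sets by (intro measure_UNION_le) auto
  also have "\<dots> \<le> (\<Sum>b\<in>(Basis::'b set). (\<Sum>i\<in>{Nidx a T n..<Nidx a T (Suc n)}. (a i)\<^sup>2) * (\<bar>K\<bar> * (1 + R\<^sup>2)) / (\<epsilon> / d)\<^sup>2)"
    unfolding E_def using \<epsilon> d by (intro sum_mono truncated_noise_coordinate_exceedance_le) auto
  also have "\<dots> = real DIM('b) ^ 3 * (\<bar>K\<bar> * (1 + R\<^sup>2)) / \<epsilon>\<^sup>2 * (\<Sum>i\<in>{Nidx a T n..<Nidx a T (Suc n)}. (a i)\<^sup>2)"
    using d by (simp add: d_def power2_eq_square power3_eq_cube field_simps)
  finally show ?thesis .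
qed

text \<open>Borel--Cantelli, using that the block sums of the \<open>a(i)\<^sup>2\<close> are summable.\<close>

lemma AE_eventually_truncated_noise_less:
  assumes \<epsilon>: "\<epsilon> > 0"
  shows "AE \<omega> in M. eventually (\<lambda>n. \<forall>m\<in>{Nidx a T n..Nidx a T (Suc n)}.
      norm (truncated_noise_sum a T (\<lambda>k. x k \<omega>) (\<lambda>k. Mn k \<omega>) R n m) < \<epsilon>) sequentially"
proof -
  define A where "A n = {\<omega>\<in>space M. \<exists>m\<in>{Nidx a T n..Nidx a T (Suc n)}.
      \<epsilon> \<le> norm (truncated_noise_sum a T (\<lambda>k. x k \<omega>) (\<lambda>k. Mn k \<omega>) R n m)}" for n
  have [measurable]: "A n \<in> sets M" for n
    unfolding A_def truncated_noise_sum_eq by measurable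
  define c where "c = real DIM('b) ^ 3 * (\<bar>K\<bar> * (1 + R\<^sup>2)) / \<epsilon>\<^sup>2"
  have "summable (\<lambda>n. c * (\<Sum>i\<in>{Nidx a T n..<Nidx a T (Suc n)}. (a i)\<^sup>2))"
    using summable_block_sums[OF strict_mono_mono[OF Nidx_strict_mono] _ a_sq]
    by (intro summable_mult) auto
  then have "summable (\<lambda>n. measure M (A n))"
    by (rule summable_comparison_test') (use truncated_noise_exceedance_le[OF \<epsilon>] in \<open>simp add: A_def c_def\<close>)
  then have "AE \<omega> in M. eventually (\<lambda>n. \<omega> \<in> space M - A n) sequentially"
    by (intro borel_cantelli_AE1) (auto simp: emeasure_eq_measure)
  then show ?thesis
    by eventually_elim (auto simp: A_def not_le elim!: eventually_mono)
qed

lemma AE_truncated_noise_small: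
  "AE \<omega> in M. \<forall>\<epsilon>>0. eventually (\<lambda>n. \<forall>m\<in>{Nidx a T n..Nidx a T (Suc n)}.
      norm (truncated_noise_sum a T (\<lambda>k. x k \<omega>) (\<lambda>k. Mn k \<omega>) R n m) < \<epsilon>) sequentially"
proof -
  have "AE \<omega> in M. \<forall>j. eventually (\<lambda>n. \<forall>m\<in>{Nidx a T n..Nidx a T (Suc n)}.
      norm (truncated_noise_sum a T (\<lambda>k. x k \<omega>) (\<lambda>k. Mn k \<omega>) R n m) < inverse (real (Suc j))) sequentially"
    by (simp add: AE_all_countable AE_eventually_truncated_noise_less del: of_nat_Suc)
  then show ?thesis
  proof eventually_elim
    case (elim \<omega>)
    show ?case
    proof (intro allI impI)
      fix \<epsilon> :: real assume "\<epsilon> > 0"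
      then obtain j where j: "inverse (real (Suc j)) < \<epsilon>" using reals_Archimedean by blast
      show "eventually (\<lambda>n. \<forall>m\<in>{Nidx a T n..Nidx a T (Suc n)}.
          norm (truncated_noise_sum a T (\<lambda>k. x k \<omega>) (\<lambda>k. Mn k \<omega>) R n m) < \<epsilon>) sequentially"
        using elim[rule_format, of j] by (rule eventually_mono) (use j in \<open>meson order_less_trans\<close>)
    qed
  qed
qed

lemma deviation_tendsto_zero_if_noise_small:
  assumes \<omega>: "\<omega> \<in> space M"
    and C0: "C0 \<ge> 0" "\<And>u v. v \<in> S \<Longrightarrow> norm (h u v) \<le> C0 + L * norm u"
    and small: "\<forall>\<epsilon>>0. eventually (\<lambda>n. \<forall>m\<in>{Nidx a T n..Nidx a T (Suc n)}.
      norm (truncated_noise_sum a T (\<lambda>k. x k \<omega>) (\<lambda>k. Mn k \<omega>) (gronwall_radius C0 L T) n m) < \<epsilon>)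
      sequentially"
  shows "(\<lambda>n. SUP t\<in>{0..T}. norm (xn h a T (\<lambda>k. x k \<omega>) (\<lambda>k. y k \<omega>) n t
                                 - xhat_blk a T (\<lambda>k. x k \<omega>) n t)) \<longlonglongrightarrow> 0"
proof -
  interpret path: linear_growth_path a T h "\<lambda>k. x k \<omega>" "\<lambda>k. y k \<omega>" "\<lambda>k. Mn k \<omega>" C0 L
    using x_rec[OF \<omega>] y_S[OF \<omega>] C0 L_pos by unfold_locales auto
  show ?thesis
  proof (rule tendsto_iff[THEN iffD2], intro allI impI)
    fix \<epsilon> :: real assume \<epsilon>: "\<epsilon> > 0"
    with small have "eventually (\<lambda>n. \<forall>m\<in>{Nidx a T n..Nidx a T (Suc n)}.
      norm (truncated_noise_sum a T (\<lambda>k. x k \<omega>) (\<lambda>k. Mn k \<omega>) (gronwall_radius C0 L T) n m)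
        \<le> min (\<epsilon> / 2) 1) sequentially"
      by (auto elim!: allE[of _ "min (\<epsilon> / 2) 1"] eventually_mono)
    then show "eventually (\<lambda>n. dist (SUP t\<in>{0..T}. norm (xn h a T (\<lambda>k. x k \<omega>) (\<lambda>k. y k \<omega>) n t
        - xhat_blk a T (\<lambda>k. x k \<omega>) n t)) 0 < \<epsilon>) sequentially"
    proof (rule eventually_mono)
      fix n assume "\<forall>m\<in>{Nidx a T n..Nidx a T (Suc n)}.
        norm (truncated_noise_sum a T (\<lambda>k. x k \<omega>) (\<lambda>k. Mn k \<omega>) (gronwall_radius C0 L T) n m) \<le> min (\<epsilon> / 2) 1"
      then have "\<bar>SUP t\<in>{0..T}. norm (xn h a T (\<lambda>k. x k \<omega>) (\<lambda>k. y k \<omega>) n t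
          - xhat_blk a T (\<lambda>k. x k \<omega>) n t)\<bar> \<le> min (\<epsilon> / 2) 1"
        by (intro path.sup_xn_deviation_le_truncated) auto
      then show "dist (SUP t\<in>{0..T}. norm (xn h a T (\<lambda>k. x k \<omega>) (\<lambda>k. y k \<omega>) n t
          - xhat_blk a T (\<lambda>k. x k \<omega>) n t)) 0 < \<epsilon>"
        using \<epsilon> by (simp add: dist_real_def)
    qed
  qed
qed

theorem deviation_tendsto_zero:
  "AE \<omega> in M. (\<lambda>n. SUP t\<in>{0..T}. norm (xn h a T (\<lambda>k. x k \<omega>) (\<lambda>k. y k \<omega>) n t
                                 - xhat_blk a T (\<lambda>k. x k \<omega>) n t)) \<longlonglongrightarrow> 0"
proof -
  obtain C0 where C0: "C0 \<ge> 0" "\<And>u v. v \<in> S \<Longrightarrow> norm (h u v) \<le> C0 + L * norm u"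
    using linear_growth by blast
  show ?thesis
    using AE_space AE_truncated_noise_small[of "gronwall_radius C0 L T"]
    by eventually_elim (rule deviation_tendsto_zero_if_noise_small[OF _ C0]; assumption)
qed

end

theorem lemma5:
  fixes M :: "'a measure" and F :: "nat \<Rightarrow> 'a measure"
    and S :: "'c::metric_space set"
    and h :: "'b::euclidean_space \<Rightarrow> 'c \<Rightarrow> 'b"
    and a :: "nat \<Rightarrow> real" and L K T :: real
    and x :: "nat \<Rightarrow> 'a \<Rightarrow> 'b" and y :: "nat \<Rightarrow> 'a \<Rightarrow> 'c" and Mn :: "nat \<Rightarrow> 'a \<Rightarrow> 'b"
  assumes S_compact: "compact S"
    and h_cont: "continuous_on (UNIV \<times> S) (\<lambda>(u, v). h u v)"
    and L_pos: "L > 0"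
    and h_lip: "\<And>u1 u2 v. v \<in> S \<Longrightarrow> norm (h u1 v - h u2 v) \<le> L * norm (u1 - u2)"
    and a_pos: "\<And>n. a n > 0"
    and a_div: "\<not> summable a"
    and a_sq: "summable (\<lambda>n. (a n)\<^sup>2)"
    and a_le1: "\<And>n. a n \<le> 1"
    and prob: "prob_space M"
    and filt: "filtration M F"
    and y_S: "\<And>n \<omega>. \<omega> \<in> space M \<Longrightarrow> y n \<omega> \<in> S"
    and y_adapt: "\<And>n. y n \<in> borel_measurable (F n)"
    and x0_meas: "x 0 \<in> borel_measurable (F 0)"
    and M_adapt: "\<And>n. Mn (Suc n) \<in> borel_measurable (F (Suc n))"
    and M_sq_int: "\<And>n. integrable M (\<lambda>\<omega>. (norm (Mn (Suc n) \<omega>))\<^sup>2)"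
    and M_mds: "\<And>n b. b \<in> Basis \<Longrightarrow>
        AE \<omega> in M. real_cond_exp M (F n) (\<lambda>\<omega>. Mn (Suc n) \<omega> \<bullet> b) \<omega> = 0"
    and M_var: "\<And>n. AE \<omega> in M.
        real_cond_exp M (F n) (\<lambda>\<omega>. (norm (Mn (Suc n) \<omega>))\<^sup>2) \<omega> \<le> K * (1 + (norm (x n \<omega>))\<^sup>2)"
    and x_rec: "\<And>n \<omega>. \<omega> \<in> space M \<Longrightarrow>
        x (Suc n) \<omega> = x n \<omega> + a n *\<^sub>R (h (x n \<omega>) (y n \<omega>) + Mn (Suc n) \<omega>)"
    and T_pos: "T > 0"
  shows "AE \<omega> in M.
    (\<lambda>n. SUP t\<in>{0..T}. norm (xn h a T (\<lambda>k. x k \<omega>) (\<lambda>k. y k \<omega>) n t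
                                 - xhat_blk a T (\<lambda>k. x k \<omega>) n t)) \<longlonglongrightarrow> 0"
  using assms by (rule stochastic_approximation.deviation_tendsto_zero[OF stochastic_approximation.intro])

end
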